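(* Fix a $C^0$-concept over $\mathbb{K}$. Let $E,F\in\mathcal{M}$, $U\subseteq E$ open, $k\in\mathbb{N}_0$ and $f\colon U\to F$ of class $C^k$. Then for all $(x,h,t)\in U^{[1]}$, $$f(x+th)=\sum_{j=0}^k t^j a_j(x,h)+t^kR_{k+1}(x,h,t),$$ where $a_j\colon U\times E\to F$ is of class $C^{k-j}$ and $R_{k+1}\colon U^{[1]}\to F$ is of class $C^0$ and satisfies $R_{k+1}(x,h,0)=0$. An expansion of $f$ with these properties is unique. Moreover, $a_j(x,h)$ is homogeneous of degree $j$ in $h$, i.e. $a_j(x,sh)=s^ja_j(x,h)$ for all $s\in\mathbb{K}$.
   Context: Let $\mathbb{K}$ be a commutative ring with unit carrying a topology. A $C^0$-concept over $\mathbb{K}$ consists of: (a) a class $\mathcal{M}$ of topologized $\mathbb{K}$-modules (modules with an arbitrary topology) with $\mathbb{K}\in\mathcal{M}$; (b) for $E,F\in\mathcal{M}$ and open $U\subseteq E$, a set $C^0(U,F)$ of continuous maps $U\to F$; (c) for $E_1,E_2\in\mathcal{M}$ a topology on $E_1\times E_2$ (not necessarily the product topology) making it a member of $\mathcal{M}$; subject to: (I.1) composites of $C^0$-maps are $C^0$; identities and inclusions of open subsets are $C^0$; (I.2) $x\mapsto rx+b$ is $C^0$; (I.3) $t\mapsto tv+x$, $\mathbb{K}\to E$, is $C^0$; (I.4) $\mathbb{K}^\times$ is open and inversion is $C^0$; (I.5) being $C^0$ is local on open covers; (II.1) projections and the maps $v\mapsto(v,y)$, $w\mapsto(x,w)$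 are $C^0$; (II.2) products $f_1\times f_2$ of $C^0$-maps are $C^0$; (II.3) diagonals are $C^0$; (II.4) exchange and associativity identifications of products are $C^0$ both ways; (II.5) addition and scalar multiplication are $C^0$; (III) a $C^0$-map on an open $U\subseteq\mathbb{K}$ is determined by its restriction to $U\cap\mathbb{K}^\times$. For open $V\subseteq X$, $V^{[1]}=\{(x,v,t)\in V\times X\times\mathbb{K}:x+tv\in V\}$ (topologized as subset of the product from (c)). A $C^0$-map $g\colon V\to Y$ is $C^1$ if there is a $C^0$-map $g^{[1]}\colon V^{[1]}\to Y$ with $g(x+tv)-g(x)=t\,g^{[1]}(x,v,t)$; recursively $V^{[k+1]}=(V^{[k]})^{[1]}$, $g$ is $C^{k+1}$ if $C^k$ and $g^{[k]}$ is $C^1$, $g^{[k+1]}=(g^{[k]})^{[1]}$. *)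

theory Defs
  imports "HOL-Analysis.Analysis"
begin

text \<open>All modules of the class M live in one universe of points: arbitrary atoms,
  scalars of the ring K (constructor Sc), and formal pairs (constructor Pr), so that
  set-theoretic products of modules of M, and the ring K itself, are again sets of points.\<close>

datatype ('k, 'b) pt = At 'b | Sc 'k | Pr "('k, 'b) pt" "('k, 'b) pt"

fun pfst :: "('k, 'b) pt \<Rightarrow> ('k, 'b) pt" where
  "pfst (Pr a b) = a" | "pfst _ = undefined"

fun psnd :: "('k, 'b) pt \<Rightarrow> ('k, 'b) pt" where
  "psnd (Pr a b) = b" | "psnd _ = undefined"

fun unSc :: "('k, 'b) pt \<Rightarrow> 'k" where
  "unSc (Sc t) = t" | "unSc _ = undefined"

record ('k, 'b) tmod =
  mcar :: "('k, 'b) pt set"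
  madd :: "('k, 'b) pt \<Rightarrow> ('k, 'b) pt \<Rightarrow> ('k, 'b) pt"
  mzero :: "('k, 'b) pt"
  msmul :: "'k \<Rightarrow> ('k, 'b) pt \<Rightarrow> ('k, 'b) pt"
  mtop :: "('k, 'b) pt topology"

definition is_tmod :: "('k::comm_ring_1, 'b) tmod \<Rightarrow> bool" where
  "is_tmod M \<longleftrightarrow>
     mzero M \<in> mcar M \<and>
     (\<forall>a\<in>mcar M. \<forall>b\<in>mcar M. madd M a b \<in> mcar M) \<and>
     (\<forall>r. \<forall>a\<in>mcar M. msmul M r a \<in> mcar M) \<and>
     (\<forall>a\<in>mcar M. \<forall>b\<in>mcar M. \<forall>c\<in>mcar M. madd M (madd M a b) c = madd M a (madd M b c)) \<and>
     (\<forall>a\<in>mcar M. \<forall>b\<in>mcar M. madd M a b = madd M b a) \<and>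
     (\<forall>a\<in>mcar M. madd M (mzero M) a = a) \<and>
     (\<forall>a\<in>mcar M. \<exists>b\<in>mcar M. madd M a b = mzero M) \<and>
     (\<forall>r. \<forall>a\<in>mcar M. \<forall>b\<in>mcar M. msmul M r (madd M a b) = madd M (msmul M r a) (msmul M r b)) \<and>
     (\<forall>r s. \<forall>a\<in>mcar M. msmul M (r + s) a = madd M (msmul M r a) (msmul M s a)) \<and>
     (\<forall>r s. \<forall>a\<in>mcar M. msmul M (r * s) a = msmul M r (msmul M s a)) \<and>
     (\<forall>a\<in>mcar M. msmul M 1 a = a) \<and>
     topspace (mtop M) = mcar M"

text \<open>The module structure of the product E1 x E2, with a topology T E1 E2
  (given by the concept, not necessarily the product topology).\<close>

definition prodm ::
  "(('k, 'b) tmod \<Rightarrow> ('k, 'b) tmod \<Rightarrow> ('k, 'b) pt topology) \<Rightarrow>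
   ('k, 'b) tmod \<Rightarrow> ('k, 'b) tmod \<Rightarrow> ('k, 'b) tmod" where
  "prodm T E1 E2 =
     \<lparr> mcar = {Pr a b | a b. a \<in> mcar E1 \<and> b \<in> mcar E2},
       madd = (\<lambda>p q. Pr (madd E1 (pfst p) (pfst q)) (madd E2 (psnd p) (psnd q))),
       mzero = Pr (mzero E1) (mzero E2),
       msmul = (\<lambda>r p. Pr (msmul E1 r (pfst p)) (msmul E2 r (psnd p))),
       mtop = T E1 E2 \<rparr>"

definition ring_inv :: "'k::comm_ring_1 \<Rightarrow> 'k" where
  "ring_inv t = (THE r. t * r = 1)"

text \<open>Parameters: the class Ms of modules, the module Km which is the ring K itself
  (with its topology), the product topologies T, and the predicate C0 E F U f meaning
  "f belongs to C^0(U,F)" for U open in E.  Since HOL functions are total, C0 E F U f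
  only depends on the values of f on U (extensionality condition).\<close>

definition c0_concept ::
  "('k::comm_ring_1, 'b) tmod set \<Rightarrow> ('k, 'b) tmod \<Rightarrow>
   (('k, 'b) tmod \<Rightarrow> ('k, 'b) tmod \<Rightarrow> ('k, 'b) pt topology) \<Rightarrow>
   (('k, 'b) tmod \<Rightarrow> ('k, 'b) tmod \<Rightarrow> ('k, 'b) pt set \<Rightarrow> (('k, 'b) pt \<Rightarrow> ('k, 'b) pt) \<Rightarrow> bool)
   \<Rightarrow> bool" where
  "c0_concept Ms Km T C0 \<longleftrightarrow>
     \<comment> \<open>(a) the class of topologized modules, containing K\<close>
     (\<forall>E\<in>Ms. is_tmod E) \<and>
     Km \<in> Ms \<and>
     mcar Km = range Sc \<and>
     (\<forall>a b. madd Km (Sc a) (Sc b) = Sc (a + b)) \<and>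
     mzero Km = Sc 0 \<and>
     (\<forall>r a. msmul Km r (Sc a) = Sc (r * a)) \<and>
     \<comment> \<open>(b) C^0-maps are continuous maps from an open U in E to F\<close>
     (\<forall>E F U f. C0 E F U f \<longrightarrow>
        E \<in> Ms \<and> F \<in> Ms \<and> openin (mtop E) U \<and> f ` U \<subseteq> mcar F \<and>
        continuous_map (subtopology (mtop E) U) (mtop F) f) \<and>
     (\<forall>E F U f g. C0 E F U f \<longrightarrow> (\<forall>x\<in>U. f x = g x) \<longrightarrow> C0 E F U g) \<and>
     \<comment> \<open>(c) products\<close>
     (\<forall>E1\<in>Ms. \<forall>E2\<in>Ms. prodm T E1 E2 \<in> Ms) \<and>
     \<comment> \<open>(I.1)\<close>
     (\<forall>E F G U V f g. C0 E F U f \<longrightarrow> C0 F G V g \<longrightarrow> f ` U \<subseteq> V \<longrightarrow> C0 E G U (g \<circ> f)) \<and>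
     (\<forall>E\<in>Ms. \<forall>U. openin (mtop E) U \<longrightarrow> C0 E E U id) \<and>
     \<comment> \<open>(I.2)\<close>
     (\<forall>E\<in>Ms. \<forall>r. \<forall>b\<in>mcar E. C0 E E (mcar E) (\<lambda>x. madd E (msmul E r x) b)) \<and>
     \<comment> \<open>(I.3)\<close>
     (\<forall>E\<in>Ms. \<forall>v\<in>mcar E. \<forall>x\<in>mcar E. C0 Km E (mcar Km) (\<lambda>s. madd E (msmul E (unSc s) v) x)) \<and>
     \<comment> \<open>(I.4)\<close>
     openin (mtop Km) (Sc ` {t. t dvd 1}) \<and>
     C0 Km Km (Sc ` {t. t dvd 1}) (\<lambda>s. Sc (ring_inv (unSc s))) \<and>
     \<comment> \<open>(I.5) locality\<close>
     (\<forall>E\<in>Ms. \<forall>F\<in>Ms. \<forall>U f. openin (mtop E) U \<longrightarrow>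
        (\<forall>x\<in>U. \<exists>W. openin (mtop E) W \<and> x \<in> W \<and> W \<subseteq> U \<and> C0 E F W f) \<longrightarrow> C0 E F U f) \<and>
     \<comment> \<open>(II.1)\<close>
     (\<forall>E1\<in>Ms. \<forall>E2\<in>Ms.
        C0 (prodm T E1 E2) E1 (mcar (prodm T E1 E2)) pfst \<and>
        C0 (prodm T E1 E2) E2 (mcar (prodm T E1 E2)) psnd \<and>
        (\<forall>y\<in>mcar E2. C0 E1 (prodm T E1 E2) (mcar E1) (\<lambda>v. Pr v y)) \<and>
        (\<forall>x\<in>mcar E1. C0 E2 (prodm T E1 E2) (mcar E2) (\<lambda>w. Pr x w))) \<and>
     \<comment> \<open>(II.2)\<close>
     (\<forall>E1 E2 F1 F2 U1 U2 f1 f2. C0 E1 F1 U1 f1 \<longrightarrow> C0 E2 F2 U2 f2 \<longrightarrow>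
        C0 (prodm T E1 E2) (prodm T F1 F2) {Pr a b | a b. a \<in> U1 \<and> b \<in> U2}
           (\<lambda>p. Pr (f1 (pfst p)) (f2 (psnd p)))) \<and>
     \<comment> \<open>(II.3)\<close>
     (\<forall>E\<in>Ms. C0 E (prodm T E E) (mcar E) (\<lambda>x. Pr x x)) \<and>
     \<comment> \<open>(II.4)\<close>
     (\<forall>E1\<in>Ms. \<forall>E2\<in>Ms. C0 (prodm T E1 E2) (prodm T E2 E1) (mcar (prodm T E1 E2))
        (\<lambda>p. Pr (psnd p) (pfst p))) \<and>
     (\<forall>E1\<in>Ms. \<forall>E2\<in>Ms. \<forall>E3\<in>Ms.
        C0 (prodm T (prodm T E1 E2) E3) (prodm T E1 (prodm T E2 E3))
           (mcar (prodm T (prodm T E1 E2) E3))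
           (\<lambda>p. Pr (pfst (pfst p)) (Pr (psnd (pfst p)) (psnd p))) \<and>
        C0 (prodm T E1 (prodm T E2 E3)) (prodm T (prodm T E1 E2) E3)
           (mcar (prodm T E1 (prodm T E2 E3)))
           (\<lambda>p. Pr (Pr (pfst p) (pfst (psnd p))) (psnd (psnd p)))) \<and>
     \<comment> \<open>(II.5)\<close>
     (\<forall>E\<in>Ms. C0 (prodm T E E) E (mcar (prodm T E E)) (\<lambda>p. madd E (pfst p) (psnd p)) \<and>
        C0 (prodm T Km E) E (mcar (prodm T Km E)) (\<lambda>p. msmul E (unSc (pfst p)) (psnd p))) \<and>
     \<comment> \<open>(III)\<close>
     (\<forall>F U f g. openin (mtop Km) U \<longrightarrow> C0 Km F U f \<longrightarrow> C0 Km F U g \<longrightarrow>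
        (\<forall>s\<in>U \<inter> Sc ` {t. t dvd 1}. f s = g s) \<longrightarrow> (\<forall>s\<in>U. f s = g s))"

definition ext1 :: "(('k, 'b) tmod \<Rightarrow> ('k, 'b) tmod \<Rightarrow> ('k, 'b) pt topology) \<Rightarrow>
   ('k, 'b) tmod \<Rightarrow> ('k, 'b) tmod \<Rightarrow> ('k, 'b) tmod" where
  "ext1 T Km X = prodm T X (prodm T X Km)"

definition dom1 :: "('k, 'b) tmod \<Rightarrow> ('k, 'b) pt set \<Rightarrow> ('k, 'b) pt set" where
  "dom1 X V = {Pr x (Pr v (Sc t)) | x v t. x \<in> V \<and> v \<in> mcar X \<and> madd X x (msmul X t v) \<in> V}"

fun extn :: "(('k, 'b) tmod \<Rightarrow> ('k, 'b) tmod \<Rightarrow> ('k, 'b) pt topology) \<Rightarrow>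
   ('k, 'b) tmod \<Rightarrow> nat \<Rightarrow> ('k, 'b) tmod \<Rightarrow> ('k, 'b) tmod" where
  "extn T Km 0 X = X"
| "extn T Km (Suc n) X = ext1 T Km (extn T Km n X)"

fun domn :: "(('k, 'b) tmod \<Rightarrow> ('k, 'b) tmod \<Rightarrow> ('k, 'b) pt topology) \<Rightarrow>
   ('k, 'b) tmod \<Rightarrow> nat \<Rightarrow> ('k, 'b) tmod \<Rightarrow> ('k, 'b) pt set \<Rightarrow> ('k, 'b) pt set" where
  "domn T Km 0 X V = V"
| "domn T Km (Suc n) X V = dom1 (extn T Km n X) (domn T Km n X V)"

text \<open>g1 is a difference quotient map g^[1] for g on V (the identity
  g(x+tv) - g(x) = t g^[1](x,v,t), written additively).\<close>

definition is_dq :: "('k, 'b) tmod \<Rightarrow> ('k, 'b) tmod \<Rightarrow> ('k, 'b) pt set \<Rightarrow>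
   (('k, 'b) pt \<Rightarrow> ('k, 'b) pt) \<Rightarrow> (('k, 'b) pt \<Rightarrow> ('k, 'b) pt) \<Rightarrow> bool" where
  "is_dq X Y V g g1 \<longleftrightarrow>
     (\<forall>x v t. x \<in> V \<longrightarrow> v \<in> mcar X \<longrightarrow> madd X x (msmul X t v) \<in> V \<longrightarrow>
        g (madd X x (msmul X t v)) = madd Y (g x) (msmul Y t (g1 (Pr x (Pr v (Sc t))))))"

definition isCk ::
  "(('k, 'b) tmod \<Rightarrow> ('k, 'b) tmod \<Rightarrow> ('k, 'b) pt topology) \<Rightarrow> ('k, 'b) tmod \<Rightarrow>
   (('k, 'b) tmod \<Rightarrow> ('k, 'b) tmod \<Rightarrow> ('k, 'b) pt set \<Rightarrow> (('k, 'b) pt \<Rightarrow> ('k, 'b) pt) \<Rightarrow> bool) \<Rightarrow>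
   nat \<Rightarrow> ('k, 'b) tmod \<Rightarrow> ('k, 'b) tmod \<Rightarrow> ('k, 'b) pt set \<Rightarrow> (('k, 'b) pt \<Rightarrow> ('k, 'b) pt) \<Rightarrow> bool" where
  "isCk T Km C0 n X Y V g \<longleftrightarrow>
     (\<exists>G :: nat \<Rightarrow> ('k, 'b) pt \<Rightarrow> ('k, 'b) pt.
        G 0 = g \<and>
        (\<forall>i\<le>n. C0 (extn T Km i X) Y (domn T Km i X V) (G i)) \<and>
        (\<forall>i<n. is_dq (extn T Km i X) Y (domn T Km i X V) (G i) (G (Suc i))))"

fun msum :: "('k, 'b) tmod \<Rightarrow> (nat \<Rightarrow> ('k, 'b) pt) \<Rightarrow> nat \<Rightarrow> ('k, 'b) pt" where
  "msum M g 0 = mzero M"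
| "msum M g (Suc n) = madd M (msum M g n) (g n)"

definition taylor_exp ::
  "(('k::comm_ring_1, 'b) tmod \<Rightarrow> ('k, 'b) tmod \<Rightarrow> ('k, 'b) pt topology) \<Rightarrow> ('k, 'b) tmod \<Rightarrow>
   (('k, 'b) tmod \<Rightarrow> ('k, 'b) tmod \<Rightarrow> ('k, 'b) pt set \<Rightarrow> (('k, 'b) pt \<Rightarrow> ('k, 'b) pt) \<Rightarrow> bool) \<Rightarrow>
   ('k, 'b) tmod \<Rightarrow> ('k, 'b) tmod \<Rightarrow> ('k, 'b) pt set \<Rightarrow> nat \<Rightarrow> (('k, 'b) pt \<Rightarrow> ('k, 'b) pt) \<Rightarrow>
   (nat \<Rightarrow> ('k, 'b) pt \<Rightarrow> ('k, 'b) pt) \<Rightarrow> (('k, 'b) pt \<Rightarrow> ('k, 'b) pt) \<Rightarrow> bool" where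
  "taylor_exp T Km C0 E F U k f a R \<longleftrightarrow>
     (\<forall>j\<le>k. isCk T Km C0 (k - j) (prodm T E E) F {Pr x h | x h. x \<in> U \<and> h \<in> mcar E} (a j)) \<and>
     C0 (ext1 T Km E) F (dom1 E U) R \<and>
     (\<forall>x\<in>U. \<forall>h\<in>mcar E. R (Pr x (Pr h (Sc 0))) = mzero F) \<and>
     (\<forall>x h t. Pr x (Pr h (Sc t)) \<in> dom1 E U \<longrightarrow>
        f (madd E x (msmul E t h)) =
          madd F (msum F (\<lambda>j. msmul F (t ^ j) (a j (Pr x h))) (Suc k))
                 (msmul F (t ^ k) (R (Pr x (Pr h (Sc t))))))"

end

theory Submission
  imports Defs
begin

text \<open>Write f^[0] = f, f^[1], ..., f^[k] for the iterated difference quotients. Along the line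
  t \<mapsto> x + t h, the identity f^[j](q + t e) = f^[j](q) + t f^[j+1](q, e, t) can be applied k times,
  each time at a point of the next iterated domain that depends affinely on (x, h). This produces
  the expansion with a_j(x, h) = f^[j](q_j(x, h)); each a_j is C^(k-j) because precomposition with
  a continuous affine map preserves C^n. Uniqueness is proved on each line: comparing two expansions
  at t = 0 gives equal leading coefficients, and cancelling the factor t, which is legitimate at
  units and extends to all t by axiom (III), peels off one coefficient at a time. Homogeneity
  follows from uniqueness, since replacing h by s h and t by s t in the expansion yields a second
  expansion along the same line.\<close>

lemma prodm_simps [simp]:
  "mcar (prodm T A B) = {Pr a b | a b. a \<in> mcar A \<and> b \<in> mcar B}"
  "madd (prodm T A B) p q = Pr (madd A (pfst p) (pfst q)) (madd B (psnd p) (psnd q))"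
  "mzero (prodm T A B) = Pr (mzero A) (mzero B)"
  "msmul (prodm T A B) r p = Pr (msmul A r (pfst p)) (msmul B r (psnd p))"
  "mtop (prodm T A B) = T A B"
  by (simp_all add: prodm_def)

lemma Pr_in_dom1 [simp]:
  "Pr x (Pr v (Sc t)) \<in> dom1 X V \<longleftrightarrow> x \<in> V \<and> v \<in> mcar X \<and> madd X x (msmul X t v) \<in> V"
  by (auto simp: dom1_def)

lemma dom1E:
  assumes "p \<in> dom1 X V"
  obtains x v t where "p = Pr x (Pr v (Sc t))" "x \<in> V" "v \<in> mcar X" "madd X x (msmul X t v) \<in> V"
  using assms by (auto simp: dom1_def)

lemma msum_cong: "(\<And>j. j < n \<Longrightarrow> g j = g' j) \<Longrightarrow> msum M g n = msum M g' n"
  by (induction n) auto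

section \<open>Algebra in topologized modules\<close>

context
  fixes M :: "('k::comm_ring_1, 'b) tmod"
  assumes M: "is_tmod M"
begin

lemma tmod_zero_closed [simp]: "mzero M \<in> mcar M"
  using M unfolding is_tmod_def by metis

lemma tmod_add_closed [simp]: "a \<in> mcar M \<Longrightarrow> b \<in> mcar M \<Longrightarrow> madd M a b \<in> mcar M"
  using M unfolding is_tmod_def by metis

lemma tmod_smul_closed [simp]: "a \<in> mcar M \<Longrightarrow> msmul M r a \<in> mcar M"
  using M unfolding is_tmod_def by metis

lemma tmod_add_assoc:
  "a \<in> mcar M \<Longrightarrow> b \<in> mcar M \<Longrightarrow> c \<in> mcar M \<Longrightarrow> madd M (madd M a b) c = madd M a (madd M b c)"
  using M unfolding is_tmod_def by metis

lemma tmod_add_commute: "a \<in> mcar M \<Longrightarrow> b \<in> mcar M \<Longrightarrow> madd M a b = madd M b a"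
  using M unfolding is_tmod_def by metis

lemma tmod_add_zero_left [simp]: "a \<in> mcar M \<Longrightarrow> madd M (mzero M) a = a"
  using M unfolding is_tmod_def by metis

lemma tmod_add_zero_right [simp]: "a \<in> mcar M \<Longrightarrow> madd M a (mzero M) = a"
  by (metis tmod_add_commute tmod_add_zero_left tmod_zero_closed)

lemma tmod_smul_add:
  "a \<in> mcar M \<Longrightarrow> b \<in> mcar M \<Longrightarrow> msmul M r (madd M a b) = madd M (msmul M r a) (msmul M r b)"
  using M unfolding is_tmod_def by metis

lemma tmod_add_smul: "a \<in> mcar M \<Longrightarrow> msmul M (r + s) a = madd M (msmul M r a) (msmul M s a)"
  using M unfolding is_tmod_def by metis

lemma tmod_smul_smul: "a \<in> mcar M \<Longrightarrow> msmul M r (msmul M s a) = msmul M (r * s) a"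
  using M unfolding is_tmod_def by metis

lemma tmod_smul_one [simp]: "a \<in> mcar M \<Longrightarrow> msmul M 1 a = a"
  using M unfolding is_tmod_def by metis

lemma tmod_topspace: "topspace (mtop M) = mcar M"
  using M unfolding is_tmod_def by metis

lemma tmod_add_left_cancel:
  assumes a: "a \<in> mcar M" and b: "b \<in> mcar M" and c: "c \<in> mcar M"
    and eq: "madd M a b = madd M a c"
  shows "b = c"
proof -
  have "\<exists>n\<in>mcar M. madd M a n = mzero M"
    using M a unfolding is_tmod_def by metis
  then obtain n where n: "n \<in> mcar M" "madd M a n = mzero M" by blast
  have "b = madd M (madd M n a) b" using n a b by (simp add: tmod_add_commute)
  also have "\<dots> = madd M n (madd M a c)" using n a b eq by (simp add: tmod_add_assoc)
  also have "\<dots> = c" using n a c by (simp add: tmod_add_assoc [symmetric] tmod_add_commute)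
  finally show "b = c" .
qed

lemma tmod_smul_zero_left [simp]: "a \<in> mcar M \<Longrightarrow> msmul M 0 a = mzero M"
  using tmod_add_smul [of a 0 0] tmod_add_left_cancel [of "msmul M 0 a" "msmul M 0 a" "mzero M"]
  by simp

lemma tmod_smul_zero_right [simp]: "msmul M r (mzero M) = mzero M"
  using tmod_smul_add [of "mzero M" "mzero M" r]
    tmod_add_left_cancel [of "msmul M r (mzero M)" "msmul M r (mzero M)" "mzero M"]
  by simp

lemma tmod_add_neg: "a \<in> mcar M \<Longrightarrow> madd M a (msmul M (-1) a) = mzero M"
  using tmod_add_smul [of a 1 "-1"] by simp

lemma tmod_add_diff_cancel:
  "a \<in> mcar M \<Longrightarrow> b \<in> mcar M \<Longrightarrow> madd M a (madd M b (msmul M (-1) a)) = b"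
  by (metis tmod_add_assoc tmod_add_commute tmod_add_neg tmod_add_zero_right tmod_smul_closed)

lemma msum_closed: "(\<And>j. j < n \<Longrightarrow> g j \<in> mcar M) \<Longrightarrow> msum M g n \<in> mcar M"
  by (induction n) auto

lemma msum_pow_smul_Suc:
  assumes "\<And>j. j \<le> k \<Longrightarrow> b j \<in> mcar M" and r: "r \<in> mcar M"
  shows "madd M (msum M (\<lambda>j. msmul M (t ^ j) (b j)) (Suc k)) (msmul M (t ^ Suc k) r) =
         madd M (msum M (\<lambda>j. msmul M (t ^ j) (b j)) k) (msmul M (t ^ k) (madd M (b k) (msmul M t r)))"
proof -
  have "msum M (\<lambda>j. msmul M (t ^ j) (b j)) k \<in> mcar M" using assms by (simp add: msum_closed)
  moreover have "msmul M (t ^ Suc k) r = msmul M (t ^ k) (msmul M t r)"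
    using r by (simp add: tmod_smul_smul mult.commute)
  ultimately show ?thesis using assms by (simp add: tmod_add_assoc tmod_smul_add)
qed

lemma msum_pow_smul_last:
  assumes "\<And>j. j \<le> k \<Longrightarrow> b j \<in> mcar M" and r: "r \<in> mcar M"
  shows "madd M (msum M (\<lambda>j. msmul M (t ^ j) (b j)) (Suc k)) (msmul M (t ^ k) r) =
         madd M (msum M (\<lambda>j. msmul M (t ^ j) (b j)) k) (msmul M (t ^ k) (madd M (b k) r))"
proof -
  have "msum M (\<lambda>j. msmul M (t ^ j) (b j)) k \<in> mcar M" using assms by (simp add: msum_closed)
  then show ?thesis using assms by (simp add: tmod_add_assoc tmod_smul_add)
qed

end

section \<open>The C^0 calculus and C^k maps\<close>

lemma extn_add: "extn T Km i (extn T Km j X) = extn T Km (i + j) X"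
  by (induction i) auto

lemma domn_add: "domn T Km i (extn T Km j X) (domn T Km j X V) = domn T Km (i + j) X V"
  by (induction i) (auto simp: extn_add)

lemma isCk_chain_suffix:
  assumes "\<forall>i\<le>n. C0 (extn T Km i X) Y (domn T Km i X V) (G i)"
    and "\<forall>i<n. is_dq (extn T Km i X) Y (domn T Km i X V) (G i) (G (Suc i))"
    and "j \<le> n"
  shows "isCk T Km C0 (n - j) (extn T Km j X) Y (domn T Km j X V) (G j)"
  unfolding isCk_def
proof (intro exI [of _ "\<lambda>i. G (i + j)"] conjI allI impI)
  fix i assume "i \<le> n - j"
  then show "C0 (extn T Km i (extn T Km j X)) Y (domn T Km i (extn T Km j X) (domn T Km j X V)) (G (i + j))"
    using assms by (simp add: extn_add domn_add)
next
  fix i assume "i < n - j"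
  then show "is_dq (extn T Km i (extn T Km j X)) Y (domn T Km i (extn T Km j X) (domn T Km j X V))
      (G (i + j)) (G (Suc i + j))"
    using assms by (simp add: extn_add domn_add)
qed simp

definition lift :: "(('k, 'b) pt \<Rightarrow> ('k, 'b) pt) \<Rightarrow> (('k, 'b) pt \<Rightarrow> ('k, 'b) pt) \<Rightarrow> ('k, 'b) pt \<Rightarrow> ('k, 'b) pt"
  where "lift L L0 p = Pr (L (pfst p)) (Pr (L0 (pfst (psnd p))) (psnd (psnd p)))"

fun lift_iter :: "(('k, 'b) pt \<Rightarrow> ('k, 'b) pt) \<Rightarrow> (('k, 'b) pt \<Rightarrow> ('k, 'b) pt) \<Rightarrow> nat \<Rightarrow> ('k, 'b) pt \<Rightarrow> ('k, 'b) pt"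
  where
    "lift_iter L L0 0 = L"
  | "lift_iter L L0 (Suc i) = lift (lift_iter L L0 i) (lift_iter L0 L0 i)"

lemma isCk_C0: "isCk T Km C0 n X Y V g \<Longrightarrow> C0 X Y V g"
  unfolding isCk_def by force

locale c0_setting =
  fixes Ms :: "('k::comm_ring_1, 'b) tmod set" and Km :: "('k, 'b) tmod"
    and T :: "('k, 'b) tmod \<Rightarrow> ('k, 'b) tmod \<Rightarrow> ('k, 'b) pt topology"
    and C0 :: "('k, 'b) tmod \<Rightarrow> ('k, 'b) tmod \<Rightarrow> ('k, 'b) pt set \<Rightarrow> (('k, 'b) pt \<Rightarrow> ('k, 'b) pt) \<Rightarrow> bool"
  assumes concept: "c0_concept Ms Km T C0"
begin

lemma Ms_tmod [rule_format]: "\<forall>E\<in>Ms. is_tmod E"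
  using concept unfolding c0_concept_def by (elim conjE) assumption

lemma Km_in_Ms [simp]: "Km \<in> Ms"
  using concept unfolding c0_concept_def by (elim conjE) assumption

lemma Km_carrier: "mcar Km = range Sc"
  using concept unfolding c0_concept_def by (elim conjE) assumption

lemma Km_add [simp, rule_format]: "\<forall>a b. madd Km (Sc a) (Sc b) = Sc (a + b)"
  using concept unfolding c0_concept_def by (elim conjE) assumption

lemma Km_zero [simp]: "mzero Km = Sc 0"
  using concept unfolding c0_concept_def by (elim conjE) assumption

lemma Km_smul [simp, rule_format]: "\<forall>r a. msmul Km r (Sc a) = Sc (r * a)"
  using concept unfolding c0_concept_def by (elim conjE) assumption

lemma C0D [rule_format]:
  "\<forall>E F U f. C0 E F U f \<longrightarrow>
     E \<in> Ms \<and> F \<in> Ms \<and> openin (mtop E) U \<and> f ` U \<subseteq> mcar F \<and>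
     continuous_map (subtopology (mtop E) U) (mtop F) f"
  using concept unfolding c0_concept_def by (elim conjE) assumption

lemma C0_cong_ball [rule_format]:
  "\<forall>E F U f g. C0 E F U f \<longrightarrow> (\<forall>x\<in>U. f x = g x) \<longrightarrow> C0 E F U g"
  using concept unfolding c0_concept_def by (elim conjE) assumption

lemma prodm_in_Ms [simp, rule_format]: "\<forall>E1\<in>Ms. \<forall>E2\<in>Ms. prodm T E1 E2 \<in> Ms"
  using concept unfolding c0_concept_def by (elim conjE) assumption

lemma C0_comp_o [rule_format]:
  "\<forall>E F G U V f g. C0 E F U f \<longrightarrow> C0 F G V g \<longrightarrow> f ` U \<subseteq> V \<longrightarrow> C0 E G U (g \<circ> f)"
  using concept unfolding c0_concept_def by (elim conjE) assumption

lemma C0_id [rule_format]: "\<forall>E\<in>Ms. \<forall>U. openin (mtop E) U \<longrightarrow> C0 E E U id"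
  using concept unfolding c0_concept_def by (elim conjE) assumption

lemma C0_affine [rule_format]:
  "\<forall>E\<in>Ms. \<forall>r. \<forall>b\<in>mcar E. C0 E E (mcar E) (\<lambda>x. madd E (msmul E r x) b)"
  using concept unfolding c0_concept_def by (elim conjE) assumption

lemma C0_line [rule_format]:
  "\<forall>E\<in>Ms. \<forall>v\<in>mcar E. \<forall>x\<in>mcar E. C0 Km E (mcar Km) (\<lambda>s. madd E (msmul E (unSc s) v) x)"
  using concept unfolding c0_concept_def by (elim conjE) assumption

lemma C0_prodm_maps [rule_format]:
  "\<forall>E1\<in>Ms. \<forall>E2\<in>Ms.
     C0 (prodm T E1 E2) E1 (mcar (prodm T E1 E2)) pfst \<and>
     C0 (prodm T E1 E2) E2 (mcar (prodm T E1 E2)) psnd \<and>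
     (\<forall>y\<in>mcar E2. C0 E1 (prodm T E1 E2) (mcar E1) (\<lambda>v. Pr v y)) \<and>
     (\<forall>x\<in>mcar E1. C0 E2 (prodm T E1 E2) (mcar E2) (\<lambda>w. Pr x w))"
  using concept unfolding c0_concept_def by (elim conjE) assumption

lemma C0_prod_map [rule_format]:
  "\<forall>E1 E2 F1 F2 U1 U2 f1 f2. C0 E1 F1 U1 f1 \<longrightarrow> C0 E2 F2 U2 f2 \<longrightarrow>
     C0 (prodm T E1 E2) (prodm T F1 F2) {Pr a b | a b. a \<in> U1 \<and> b \<in> U2}
        (\<lambda>p. Pr (f1 (pfst p)) (f2 (psnd p)))"
  using concept unfolding c0_concept_def by (elim conjE) assumption

lemma C0_diag [rule_format]: "\<forall>E\<in>Ms. C0 E (prodm T E E) (mcar E) (\<lambda>x. Pr x x)"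
  using concept unfolding c0_concept_def by (elim conjE) assumption

lemma C0_add_smul_maps [rule_format]:
  "\<forall>E\<in>Ms. C0 (prodm T E E) E (mcar (prodm T E E)) (\<lambda>p. madd E (pfst p) (psnd p)) \<and>
     C0 (prodm T Km E) E (mcar (prodm T Km E)) (\<lambda>p. msmul E (unSc (pfst p)) (psnd p))"
  using concept unfolding c0_concept_def by (elim conjE) assumption

lemma C0_eq_on_units [rule_format]:
  "\<forall>F U f g. openin (mtop Km) U \<longrightarrow> C0 Km F U f \<longrightarrow> C0 Km F U g \<longrightarrow>
     (\<forall>s\<in>U \<inter> Sc ` {t. t dvd 1}. f s = g s) \<longrightarrow> (\<forall>s\<in>U. f s = g s)"
  using concept unfolding c0_concept_def by (elim conjE) assumption

lemma Sc_in_Km [simp]: "Sc a \<in> mcar Km"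
  by (simp add: Km_carrier)

lemma Km_cases: "s \<in> mcar Km \<Longrightarrow> (\<And>t. s = Sc t \<Longrightarrow> P) \<Longrightarrow> P"
  using Km_carrier by auto

lemma C0_dom_in_Ms: "C0 E F U f \<Longrightarrow> E \<in> Ms"
  using C0D by blast

lemma C0_cod_in_Ms: "C0 E F U f \<Longrightarrow> F \<in> Ms"
  using C0D by blast

lemma C0_openin: "C0 E F U f \<Longrightarrow> openin (mtop E) U"
  using C0D by blast

lemma C0_image: "C0 E F U f \<Longrightarrow> x \<in> U \<Longrightarrow> f x \<in> mcar F"
  using C0D by blast

lemma C0_cong: "C0 E F U f \<Longrightarrow> (\<And>x. x \<in> U \<Longrightarrow> f x = g x) \<Longrightarrow> C0 E F U g"
  using C0_cong_ball by blast

lemma openin_subset_mcar: "E \<in> Ms \<Longrightarrow> openin (mtop E) U \<Longrightarrow> U \<subseteq> mcar E"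
  using openin_subset tmod_topspace Ms_tmod by metis

lemma openin_mcar: "E \<in> Ms \<Longrightarrow> openin (mtop E) (mcar E)"
  using openin_topspace tmod_topspace Ms_tmod by metis

lemma C0_comp:
  "C0 E F U f \<Longrightarrow> C0 F G V g \<Longrightarrow> (\<And>x. x \<in> U \<Longrightarrow> f x \<in> V) \<Longrightarrow> C0 E G U (\<lambda>x. g (f x))"
  using C0_comp_o [of E F U f G V g] by (auto simp: o_def)

lemma C0_ident: "C0 Z X D f \<Longrightarrow> C0 Z Z D (\<lambda>z. z)"
  using C0_id [OF C0_dom_in_Ms C0_openin] by (simp add: id_def)

lemma C0_restrict: "C0 E F U f \<Longrightarrow> openin (mtop E) D \<Longrightarrow> D \<subseteq> U \<Longrightarrow> C0 E F D f"
proof -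
  assume f: "C0 E F U f" and D: "openin (mtop E) D" "D \<subseteq> U"
  have "C0 E E D id" using C0_id [OF C0_dom_in_Ms [OF f] D(1)] .
  from C0_comp [OF this f] D show ?thesis by auto
qed

lemma C0_pfst: "E1 \<in> Ms \<Longrightarrow> E2 \<in> Ms \<Longrightarrow> C0 (prodm T E1 E2) E1 (mcar (prodm T E1 E2)) pfst"
  using C0_prodm_maps by blast

lemma C0_psnd: "E1 \<in> Ms \<Longrightarrow> E2 \<in> Ms \<Longrightarrow> C0 (prodm T E1 E2) E2 (mcar (prodm T E1 E2)) psnd"
  using C0_prodm_maps by blast

lemma C0_Pr_left: "E1 \<in> Ms \<Longrightarrow> E2 \<in> Ms \<Longrightarrow> y \<in> mcar E2 \<Longrightarrow> C0 E1 (prodm T E1 E2) (mcar E1) (\<lambda>v. Pr v y)"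
  using C0_prodm_maps by blast

lemma C0_Pr_right: "E1 \<in> Ms \<Longrightarrow> E2 \<in> Ms \<Longrightarrow> x \<in> mcar E1 \<Longrightarrow> C0 E2 (prodm T E1 E2) (mcar E2) (\<lambda>w. Pr x w)"
  using C0_prodm_maps by blast

lemma C0_const: "E1 \<in> Ms \<Longrightarrow> E2 \<in> Ms \<Longrightarrow> y \<in> mcar E2 \<Longrightarrow> openin (mtop E1) D \<Longrightarrow> C0 E1 E2 D (\<lambda>_. y)"
  using C0_restrict [OF C0_comp [OF C0_Pr_left C0_psnd, of E1 E2 y]] openin_subset_mcar by auto

lemma C0_pair: "C0 Z A D f \<Longrightarrow> C0 Z B D g \<Longrightarrow> C0 Z (prodm T A B) D (\<lambda>z. Pr (f z) (g z))"
proof -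
  assume f: "C0 Z A D f" and g: "C0 Z B D g"
  have Z: "Z \<in> Ms" using C0_dom_in_Ms [OF f] .
  have "C0 Z (prodm T Z Z) D (\<lambda>x. Pr x x)"
    using C0_restrict [OF C0_diag [OF Z]] C0_openin [OF f] openin_subset_mcar [OF Z] by blast
  from C0_comp [OF this C0_prod_map [OF f g]] show ?thesis by auto
qed

lemma C0_fst: "A \<in> Ms \<Longrightarrow> B \<in> Ms \<Longrightarrow> C0 Z (prodm T A B) D f \<Longrightarrow> C0 Z A D (\<lambda>z. pfst (f z))"
  using C0_comp [OF _ C0_pfst] C0_image by blast

lemma C0_snd: "A \<in> Ms \<Longrightarrow> B \<in> Ms \<Longrightarrow> C0 Z (prodm T A B) D f \<Longrightarrow> C0 Z B D (\<lambda>z. psnd (f z))"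
  using C0_comp [OF _ C0_psnd] C0_image by blast

lemma C0_add: "C0 Z X D f \<Longrightarrow> C0 Z X D g \<Longrightarrow> C0 Z X D (\<lambda>z. madd X (f z) (g z))"
  using C0_comp [OF C0_pair C0_add_smul_maps [THEN conjunct1, OF C0_cod_in_Ms]] C0_image by fastforce

lemma C0_smul: "C0 Z Km D f \<Longrightarrow> C0 Z X D g \<Longrightarrow> C0 Z X D (\<lambda>z. msmul X (unSc (f z)) (g z))"
  using C0_comp [OF C0_pair C0_add_smul_maps [THEN conjunct2, OF C0_cod_in_Ms]] C0_image by fastforce

lemma C0_scale: "C0 Z X D g \<Longrightarrow> C0 Z X D (\<lambda>z. msmul X r (g z))"
proof -
  assume g: "C0 Z X D g"
  have X: "is_tmod X" using Ms_tmod [OF C0_cod_in_Ms [OF g]] .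
  show ?thesis
    using C0_cong [OF C0_comp [OF g C0_affine [OF C0_cod_in_Ms [OF g] tmod_zero_closed [OF X], of r]]]
    by (simp add: C0_image [OF g] X)
qed

lemma C0_add_const: "C0 Z X D g \<Longrightarrow> b \<in> mcar X \<Longrightarrow> C0 Z X D (\<lambda>z. madd X b (g z))"
proof -
  assume g: "C0 Z X D g" and b: "b \<in> mcar X"
  have X: "is_tmod X" using Ms_tmod [OF C0_cod_in_Ms [OF g]] .
  show ?thesis
    using C0_cong [OF C0_comp [OF g C0_affine [OF C0_cod_in_Ms [OF g] b, of 1]]]
    by (simp add: C0_image [OF g] X b tmod_add_commute)
qed

lemma openin_C0_preimage:
  assumes f: "C0 Z X (mcar Z) f" and V: "openin (mtop X) V"
  shows "openin (mtop Z) {z \<in> mcar Z. f z \<in> V}"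
proof -
  have Z: "is_tmod Z" using Ms_tmod [OF C0_dom_in_Ms [OF f]] .
  have "continuous_map (mtop Z) (mtop X) f"
    using C0D [OF f] tmod_topspace [OF Z] by (metis subtopology_topspace)
  from openin_continuous_map_preimage [OF this V] show ?thesis using tmod_topspace [OF Z] by simp
qed

lemma ext1_in_Ms [simp]: "X \<in> Ms \<Longrightarrow> ext1 T Km X \<in> Ms"
  by (simp add: ext1_def)

lemma extn_in_Ms [simp]: "X \<in> Ms \<Longrightarrow> extn T Km n X \<in> Ms"
  by (induction n) auto

lemma ext1_carrier: "mcar (ext1 T Km X) = {Pr x (Pr v (Sc t)) | x v t. x \<in> mcar X \<and> v \<in> mcar X}"
  by (auto simp: ext1_def Km_carrier)

lemma Pr_in_ext1 [simp]: "Pr x (Pr v (Sc t)) \<in> mcar (ext1 T Km X) \<longleftrightarrow> x \<in> mcar X \<and> v \<in> mcar X"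
  by (auto simp: ext1_carrier)

lemma ext1_simps [simp]:
  "madd (ext1 T Km X) (Pr x (Pr v (Sc t))) (Pr x' (Pr v' (Sc t'))) =
     Pr (madd X x x') (Pr (madd X v v') (Sc (t + t')))"
  "msmul (ext1 T Km X) r (Pr x (Pr v (Sc t))) = Pr (msmul X r x) (Pr (msmul X r v) (Sc (r * t)))"
  "mzero (ext1 T Km X) = Pr (mzero X) (Pr (mzero X) (Sc 0))"
  by (simp_all add: ext1_def)

lemma C0_ext1_proj:
  assumes X: "X \<in> Ms"
  shows "C0 (ext1 T Km X) X (mcar (ext1 T Km X)) pfst"
    and "C0 (ext1 T Km X) X (mcar (ext1 T Km X)) (\<lambda>p. pfst (psnd p))"
    and "C0 (ext1 T Km X) Km (mcar (ext1 T Km X)) (\<lambda>p. psnd (psnd p))"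
proof -
  have snd: "C0 (ext1 T Km X) (prodm T X Km) (mcar (ext1 T Km X)) psnd"
    unfolding ext1_def by (rule C0_psnd) (simp_all add: X)
  show "C0 (ext1 T Km X) X (mcar (ext1 T Km X)) (\<lambda>p. pfst (psnd p))"
    using C0_fst [OF X Km_in_Ms snd] .
  show "C0 (ext1 T Km X) Km (mcar (ext1 T Km X)) (\<lambda>p. psnd (psnd p))"
    using C0_snd [OF X Km_in_Ms snd] .
  show "C0 (ext1 T Km X) X (mcar (ext1 T Km X)) pfst"
    unfolding ext1_def by (rule C0_pfst) (simp_all add: X)
qed

lemma C0_ext1_endpoint:
  "X \<in> Ms \<Longrightarrow> C0 (ext1 T Km X) X (mcar (ext1 T Km X))
     (\<lambda>p. madd X (pfst p) (msmul X (unSc (psnd (psnd p))) (pfst (psnd p))))"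
  using C0_add [OF C0_ext1_proj(1) C0_smul [OF C0_ext1_proj(3) C0_ext1_proj(2)]] .

lemma openin_dom1:
  assumes X: "X \<in> Ms" and V: "openin (mtop X) V"
  shows "openin (mtop (ext1 T Km X)) (dom1 X V)"
proof -
  let ?endpoint = "\<lambda>p. madd X (pfst p) (msmul X (unSc (psnd (psnd p))) (pfst (psnd p)))"
  have "dom1 X V = {p \<in> mcar (ext1 T Km X). pfst p \<in> V} \<inter> {p \<in> mcar (ext1 T Km X). ?endpoint p \<in> V}"
    using openin_subset_mcar [OF X V] by (auto simp: dom1_def ext1_carrier)
  then show ?thesis
    using openin_C0_preimage [OF C0_ext1_proj(1) V] openin_C0_preimage [OF C0_ext1_endpoint V] X
    by (simp add: openin_Int)
qed

lemma openin_domn: "X \<in> Ms \<Longrightarrow> openin (mtop X) V \<Longrightarrow> openin (mtop (extn T Km n X)) (domn T Km n X V)"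
  by (induction n) (auto simp: openin_dom1)

lemma domn_subset: "X \<in> Ms \<Longrightarrow> openin (mtop X) V \<Longrightarrow> domn T Km n X V \<subseteq> mcar (extn T Km n X)"
  using openin_subset_mcar [OF extn_in_Ms openin_domn] by blast

text \<open>The linear part L0 must itself be affine (with linear part L0) so that affinity survives
  the passage to the iterated domains, where L0 becomes the map on the direction component.\<close>

definition affine_map ::
  "('k, 'b) tmod \<Rightarrow> ('k, 'b) tmod \<Rightarrow> (('k, 'b) pt \<Rightarrow> ('k, 'b) pt) \<Rightarrow> (('k, 'b) pt \<Rightarrow> ('k, 'b) pt) \<Rightarrow> bool"
  where "affine_map Z X L L0 \<longleftrightarrow> C0 Z X (mcar Z) L \<and> C0 Z X (mcar Z) L0 \<and>
     (\<forall>z\<in>mcar Z. \<forall>w\<in>mcar Z. \<forall>t.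
        L (madd Z z (msmul Z t w)) = madd X (L z) (msmul X t (L0 w)) \<and>
        L0 (madd Z z (msmul Z t w)) = madd X (L0 z) (msmul X t (L0 w)))"

lemma affine_map_linear_part: "affine_map Z X L L0 \<Longrightarrow> affine_map Z X L0 L0"
  by (simp add: affine_map_def)

lemma affine_map_lift:
  assumes A: "affine_map Z X L L0"
  shows "affine_map (ext1 T Km Z) (ext1 T Km X) (lift L L0) (lift L0 L0)"
proof -
  have L: "C0 Z X (mcar Z) L" and L0: "C0 Z X (mcar Z) L0" using A by (auto simp: affine_map_def)
  have Z: "Z \<in> Ms" using C0_dom_in_Ms [OF L] .
  have lift_C0: "C0 (ext1 T Km Z) (ext1 T Km X) (mcar (ext1 T Km Z)) (lift M M0)"
    if "C0 Z X (mcar Z) M" "C0 Z X (mcar Z) M0" for M M0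
  proof -
    have "C0 (ext1 T Km Z) X (mcar (ext1 T Km Z)) (\<lambda>p. M (pfst p))"
      by (rule C0_comp [OF C0_ext1_proj(1) [OF Z] that(1)]) (auto simp: ext1_carrier)
    moreover have "C0 (ext1 T Km Z) X (mcar (ext1 T Km Z)) (\<lambda>p. M0 (pfst (psnd p)))"
      by (rule C0_comp [OF C0_ext1_proj(2) [OF Z] that(2)]) (auto simp: ext1_carrier)
    ultimately show ?thesis
      unfolding lift_def ext1_def by (intro C0_pair C0_ext1_proj(3) [OF Z, unfolded ext1_def])
  qed
  show ?thesis unfolding affine_map_def
  proof (intro conjI lift_C0 L L0 ballI allI)
    fix z w t assume "z \<in> mcar (ext1 T Km Z)" "w \<in> mcar (ext1 T Km Z)"
    then obtain a b s a' b' s' where "z = Pr a (Pr b (Sc s))" "w = Pr a' (Pr b' (Sc s'))"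
      "a \<in> mcar Z" "b \<in> mcar Z" "a' \<in> mcar Z" "b' \<in> mcar Z"
      by (auto simp: ext1_carrier)
    with A show "lift L L0 (madd (ext1 T Km Z) z (msmul (ext1 T Km Z) t w)) =
        madd (ext1 T Km X) (lift L L0 z) (msmul (ext1 T Km X) t (lift L0 L0 w))"
      and "lift L0 L0 (madd (ext1 T Km Z) z (msmul (ext1 T Km Z) t w)) =
        madd (ext1 T Km X) (lift L0 L0 z) (msmul (ext1 T Km X) t (lift L0 L0 w))"
      by (simp_all add: lift_def affine_map_def)
  qed
qed

lemma affine_map_lift_iter:
  "affine_map Z X L L0 \<Longrightarrow>
   affine_map (extn T Km i Z) (extn T Km i X) (lift_iter L L0 i) (lift_iter L0 L0 i)"
  by (induction i arbitrary: L L0) (auto intro: affine_map_lift dest: affine_map_linear_part)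

lemma affine_map_const: "Z \<in> Ms \<Longrightarrow> X \<in> Ms \<Longrightarrow> c \<in> mcar X \<Longrightarrow> affine_map Z X (\<lambda>_. c) (\<lambda>_. mzero X)"
  unfolding affine_map_def by (auto simp: C0_const openin_mcar Ms_tmod)

lemma affine_map_pfst: "E \<in> Ms \<Longrightarrow> affine_map (prodm T E E) E pfst pfst"
  unfolding affine_map_def using C0_pfst by auto

lemma affine_map_psnd: "E \<in> Ms \<Longrightarrow> affine_map (prodm T E E) E psnd psnd"
  unfolding affine_map_def using C0_psnd by auto

lemma affine_map_Pr_Sc0:
  assumes A: "affine_map Z X L L0" and B: "affine_map Z X M M0"
  shows "affine_map Z (ext1 T Km X) (\<lambda>z. Pr (L z) (Pr (M z) (Sc 0))) (\<lambda>z. Pr (L0 z) (Pr (M0 z) (Sc 0)))"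
proof -
  have L: "C0 Z X (mcar Z) L" and L0: "C0 Z X (mcar Z) L0"
    and M: "C0 Z X (mcar Z) M" and M0: "C0 Z X (mcar Z) M0"
    using A B by (auto simp: affine_map_def)
  have c: "C0 Z Km (mcar Z) (\<lambda>_. Sc 0)"
    using C0_const [OF C0_dom_in_Ms [OF L] Km_in_Ms] C0_openin [OF L] by simp
  show ?thesis unfolding affine_map_def
  proof (intro conjI ballI allI)
    show "C0 Z (ext1 T Km X) (mcar Z) (\<lambda>z. Pr (L z) (Pr (M z) (Sc 0)))"
      and "C0 Z (ext1 T Km X) (mcar Z) (\<lambda>z. Pr (L0 z) (Pr (M0 z) (Sc 0)))"
      unfolding ext1_def by (intro C0_pair L L0 M M0 c)+
    fix z w t assume "z \<in> mcar Z" "w \<in> mcar Z"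
    with A B show "Pr (L (madd Z z (msmul Z t w))) (Pr (M (madd Z z (msmul Z t w))) (Sc 0)) =
        madd (ext1 T Km X) (Pr (L z) (Pr (M z) (Sc 0))) (msmul (ext1 T Km X) t (Pr (L0 w) (Pr (M0 w) (Sc 0))))"
      and "Pr (L0 (madd Z z (msmul Z t w))) (Pr (M0 (madd Z z (msmul Z t w))) (Sc 0)) =
        madd (ext1 T Km X) (Pr (L0 z) (Pr (M0 z) (Sc 0))) (msmul (ext1 T Km X) t (Pr (L0 w) (Pr (M0 w) (Sc 0))))"
      by (simp_all add: affine_map_def)
  qed
qed

lemma lift_iter_maps_domn:
  assumes A: "affine_map Z X L L0" and Z: "Z \<in> Ms" and D: "openin (mtop Z) D"
    and LD: "\<And>z. z \<in> D \<Longrightarrow> L z \<in> V"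
  shows "z \<in> domn T Km i Z D \<Longrightarrow> lift_iter L L0 i z \<in> domn T Km i X V"
proof (induction i arbitrary: z)
  case 0
  then show ?case using LD by simp
next
  case (Suc i)
  let ?Zi = "extn T Km i Z" and ?Xi = "extn T Km i X"
  have Ai: "affine_map ?Zi ?Xi (lift_iter L L0 i) (lift_iter L0 L0 i)"
    using affine_map_lift_iter [OF A] .
  from Suc.prems obtain y w t where p: "z = Pr y (Pr w (Sc t))" "y \<in> domn T Km i Z D"
    "w \<in> mcar ?Zi" "madd ?Zi y (msmul ?Zi t w) \<in> domn T Km i Z D"
    by (auto elim: dom1E)
  have "y \<in> mcar ?Zi" using p(2) domn_subset [OF Z D] by blast
  then have "madd ?Xi (lift_iter L L0 i y) (msmul ?Xi t (lift_iter L0 L0 i w)) =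
      lift_iter L L0 i (madd ?Zi y (msmul ?Zi t w))"
    using Ai p(3) unfolding affine_map_def by metis
  then have "madd ?Xi (lift_iter L L0 i y) (msmul ?Xi t (lift_iter L0 L0 i w)) \<in> domn T Km i X V"
    using Suc.IH [OF p(4)] by simp
  moreover have "lift_iter L0 L0 i w \<in> mcar ?Xi"
    using Ai p(3) C0_image unfolding affine_map_def by blast
  ultimately show ?case using p Suc.IH by (simp add: lift_def)
qed

lemma isCk_comp_affine:
  assumes g: "isCk T Km C0 n X Y V g" and A: "affine_map Z X L L0" and D: "openin (mtop Z) D"
    and LD: "\<And>z. z \<in> D \<Longrightarrow> L z \<in> V"
  shows "isCk T Km C0 n Z Y D (\<lambda>z. g (L z))"
proof -
  obtain G where G0: "G 0 = g" and GC: "\<forall>i\<le>n. C0 (extn T Km i X) Y (domn T Km i X V) (G i)"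
    and Gdq: "\<forall>i<n. is_dq (extn T Km i X) Y (domn T Km i X V) (G i) (G (Suc i))"
    using g unfolding isCk_def by blast
  have Z: "Z \<in> Ms" using A C0_dom_in_Ms unfolding affine_map_def by blast
  have Ai: "affine_map (extn T Km i Z) (extn T Km i X) (lift_iter L L0 i) (lift_iter L0 L0 i)" for i
    using affine_map_lift_iter [OF A] .
  have Mi: "lift_iter L L0 i z \<in> domn T Km i X V" if "z \<in> domn T Km i Z D" for i z
    using lift_iter_maps_domn [OF A Z D LD that] .
  show ?thesis unfolding isCk_def
  proof (intro exI [of _ "\<lambda>i z. G i (lift_iter L L0 i z)"] conjI allI impI)
    show "(\<lambda>z. G 0 (lift_iter L L0 0 z)) = (\<lambda>z. g (L z))" by (simp add: G0)
  next
    fix i assume i: "i \<le> n"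
    have "C0 (extn T Km i Z) (extn T Km i X) (mcar (extn T Km i Z)) (lift_iter L L0 i)"
      using Ai [of i] unfolding affine_map_def by blast
    then have "C0 (extn T Km i Z) (extn T Km i X) (domn T Km i Z D) (lift_iter L L0 i)"
      using C0_restrict openin_domn [OF Z D] domn_subset [OF Z D] by blast
    from C0_comp [OF this GC [rule_format, OF i] Mi]
    show "C0 (extn T Km i Z) Y (domn T Km i Z D) (\<lambda>z. G i (lift_iter L L0 i z))" .
  next
    fix i assume i: "i < n"
    let ?Zi = "extn T Km i Z" and ?Xi = "extn T Km i X"
    show "is_dq ?Zi Y (domn T Km i Z D) (\<lambda>z. G i (lift_iter L L0 i z))
        (\<lambda>z. G (Suc i) (lift_iter L L0 (Suc i) z))"
      unfolding is_dq_def
    proof (intro allI impI)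
      fix z w t assume z: "z \<in> domn T Km i Z D" and w: "w \<in> mcar ?Zi"
        and zw: "madd ?Zi z (msmul ?Zi t w) \<in> domn T Km i Z D"
      have "z \<in> mcar ?Zi" using z domn_subset [OF Z D] by blast
      then have L_zw: "lift_iter L L0 i (madd ?Zi z (msmul ?Zi t w)) =
          madd ?Xi (lift_iter L L0 i z) (msmul ?Xi t (lift_iter L0 L0 i w))"
        using Ai [of i] w unfolding affine_map_def by blast
      have "lift_iter L0 L0 i w \<in> mcar ?Xi"
        using Ai [of i] w C0_image unfolding affine_map_def by blast
      moreover have "madd ?Xi (lift_iter L L0 i z) (msmul ?Xi t (lift_iter L0 L0 i w)) \<in> domn T Km i X V"
        using Mi [OF zw] L_zw by simp
      ultimately have "G i (madd ?Xi (lift_iter L L0 i z) (msmul ?Xi t (lift_iter L0 L0 i w))) =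
          madd Y (G i (lift_iter L L0 i z))
            (msmul Y t (G (Suc i) (Pr (lift_iter L L0 i z) (Pr (lift_iter L0 L0 i w) (Sc t)))))"
        using Gdq [rule_format, OF i] Mi [OF z] unfolding is_dq_def by blast
      then show "G i (lift_iter L L0 i (madd ?Zi z (msmul ?Zi t w))) =
          madd Y (G i (lift_iter L L0 i z)) (msmul Y t (G (Suc i) (lift_iter L L0 (Suc i) (Pr z (Pr w (Sc t))))))"
        using L_zw by (simp add: lift_def)
    qed
  qed
qed

end

section \<open>Existence of the expansion\<close>

text \<open>Expansion points: with q_0 = x, e_0 = h, q_(j+1) = (q_j, e_j, 0) and e_(j+1) = (0, 0, 1),
  the difference quotient identity gives f^[j](q_j + t e_j) = f^[j](q_j) + t f^[j+1](q_(j+1) + t e_(j+1)),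
  so iterating it expands f(x + t h) with coefficients f^[j](q_j).\<close>

fun taylor_dir :: "(('k, 'b) tmod \<Rightarrow> ('k, 'b) tmod \<Rightarrow> ('k, 'b) pt topology) \<Rightarrow> ('k::comm_ring_1, 'b) tmod \<Rightarrow>
    ('k, 'b) tmod \<Rightarrow> nat \<Rightarrow> ('k, 'b) pt \<Rightarrow> ('k, 'b) pt"
  where
    "taylor_dir T Km E 0 h = h"
  | "taylor_dir T Km E (Suc m) h = Pr (mzero (extn T Km m E)) (Pr (mzero (extn T Km m E)) (Sc 1))"

fun taylor_base :: "(('k, 'b) tmod \<Rightarrow> ('k, 'b) tmod \<Rightarrow> ('k, 'b) pt topology) \<Rightarrow> ('k::comm_ring_1, 'b) tmod \<Rightarrow>
    ('k, 'b) tmod \<Rightarrow> nat \<Rightarrow> ('k, 'b) pt \<Rightarrow> ('k, 'b) pt"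
  where
    "taylor_base T Km E 0 z = pfst z"
  | "taylor_base T Km E (Suc m) z = Pr (taylor_base T Km E m z) (Pr (taylor_dir T Km E m (psnd z)) (Sc 0))"

definition taylor_point :: "(('k, 'b) tmod \<Rightarrow> ('k, 'b) tmod \<Rightarrow> ('k, 'b) pt topology) \<Rightarrow> ('k::comm_ring_1, 'b) tmod \<Rightarrow>
    ('k, 'b) tmod \<Rightarrow> nat \<Rightarrow> ('k, 'b) pt \<Rightarrow> ('k, 'b) pt"
  where "taylor_point T Km E m p =
    madd (extn T Km m E) (taylor_base T Km E m (Pr (pfst p) (pfst (psnd p))))
      (msmul (extn T Km m E) (unSc (psnd (psnd p))) (taylor_dir T Km E m (pfst (psnd p))))"

context c0_setting
begin

context
  fixes E :: "('k, 'b) tmod" and U :: "('k, 'b) pt set"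
  assumes E: "E \<in> Ms" and U: "openin (mtop E) U"
begin

lemma taylor_dir_mem: "h \<in> mcar E \<Longrightarrow> taylor_dir T Km E m h \<in> mcar (extn T Km m E)"
  by (cases m) (auto simp: E Ms_tmod)

lemma taylor_base_mem: "x \<in> U \<Longrightarrow> h \<in> mcar E \<Longrightarrow> taylor_base T Km E m (Pr x h) \<in> domn T Km m E U"
proof (induction m)
  case (Suc m)
  then have "taylor_base T Km E m (Pr x h) \<in> mcar (extn T Km m E)"
    using domn_subset [OF E U] by blast
  with Suc show ?case
    using taylor_dir_mem [OF Suc.prems(2), of m] Ms_tmod [OF extn_in_Ms [OF E, of m]] by simp
qed simp

lemma taylor_base_in_mcar: "x \<in> U \<Longrightarrow> h \<in> mcar E \<Longrightarrow> taylor_base T Km E m (Pr x h) \<in> mcar (extn T Km m E)"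
  using taylor_base_mem domn_subset [OF E U] by blast

lemma taylor_point_Sc0:
  "x \<in> U \<Longrightarrow> h \<in> mcar E \<Longrightarrow> taylor_point T Km E m (Pr x (Pr h (Sc 0))) = taylor_base T Km E m (Pr x h)"
  by (simp add: taylor_point_def taylor_base_in_mcar taylor_dir_mem Ms_tmod E)

lemma taylor_point_Suc:
  "x \<in> U \<Longrightarrow> h \<in> mcar E \<Longrightarrow> taylor_point T Km E (Suc m) (Pr x (Pr h (Sc t))) =
     Pr (taylor_base T Km E m (Pr x h)) (Pr (taylor_dir T Km E m h) (Sc t))"
  by (simp add: taylor_point_def taylor_base_in_mcar taylor_dir_mem Ms_tmod E)

lemma taylor_point_mem:
  assumes "Pr x (Pr h (Sc t)) \<in> dom1 E U"
  shows "taylor_point T Km E m (Pr x (Pr h (Sc t))) \<in> domn T Km m E U"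
proof (induction m)
  case 0
  then show ?case using assms by (simp add: taylor_point_def)
next
  case (Suc m)
  then show ?case
    using assms taylor_point_Suc [of x h m t] taylor_base_mem [of x h m] taylor_dir_mem [of h m]
    by (simp add: taylor_point_def)
qed

end

context
  fixes E :: "('k, 'b) tmod"
  assumes E: "E \<in> Ms"
begin

lemma affine_map_taylor_dir: "\<exists>M0. affine_map (prodm T E E) (extn T Km m E) (\<lambda>z. taylor_dir T Km E m (psnd z)) M0"
proof (cases m)
  case 0
  then show ?thesis using affine_map_psnd [OF E] by auto
next
  case (Suc n)
  have "Pr (mzero (extn T Km n E)) (Pr (mzero (extn T Km n E)) (Sc 1)) \<in> mcar (extn T Km m E)"
    using Suc E by (simp add: Ms_tmod)
  then have "affine_map (prodm T E E) (extn T Km m E)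
      (\<lambda>_. Pr (mzero (extn T Km n E)) (Pr (mzero (extn T Km n E)) (Sc 1))) (\<lambda>_. mzero (extn T Km m E))"
    by (intro affine_map_const) (simp_all add: E)
  then show ?thesis using Suc by auto
qed

lemma affine_map_taylor_base: "\<exists>L0. affine_map (prodm T E E) (extn T Km m E) (taylor_base T Km E m) L0"
proof (induction m)
  case 0
  then show ?case using affine_map_pfst [OF E] by (auto simp: fun_eq_iff)
next
  case (Suc m)
  then obtain L0 where "affine_map (prodm T E E) (extn T Km m E) (taylor_base T Km E m) L0" by blast
  moreover obtain M0 where "affine_map (prodm T E E) (extn T Km m E) (\<lambda>z. taylor_dir T Km E m (psnd z)) M0"
    using affine_map_taylor_dir by blast
  ultimately have "affine_map (prodm T E E) (extn T Km (Suc m) E)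
      (\<lambda>z. Pr (taylor_base T Km E m z) (Pr (taylor_dir T Km E m (psnd z)) (Sc 0)))
      (\<lambda>z. Pr (L0 z) (Pr (M0 z) (Sc 0)))"
    by (simp add: affine_map_Pr_Sc0)
  moreover have "taylor_base T Km E (Suc m) =
      (\<lambda>z. Pr (taylor_base T Km E m z) (Pr (taylor_dir T Km E m (psnd z)) (Sc 0)))"
    by (simp add: fun_eq_iff)
  ultimately show ?case by auto
qed

lemma C0_taylor_base: "C0 (prodm T E E) (extn T Km m E) (mcar (prodm T E E)) (taylor_base T Km E m)"
  using affine_map_taylor_base unfolding affine_map_def by blast

lemma C0_taylor_dir: "C0 E (extn T Km m E) (mcar E) (taylor_dir T Km E m)"
proof (cases m)
  case 0
  have "taylor_dir T Km E 0 = id" by (simp add: fun_eq_iff)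
  then show ?thesis using 0 C0_id [OF E openin_mcar [OF E]] by simp
next
  case (Suc n)
  have "taylor_dir T Km E m = (\<lambda>_. Pr (mzero (extn T Km n E)) (Pr (mzero (extn T Km n E)) (Sc 1)))"
    using Suc by (simp add: fun_eq_iff)
  moreover have "Pr (mzero (extn T Km n E)) (Pr (mzero (extn T Km n E)) (Sc 1)) \<in> mcar (extn T Km m E)"
    using Suc E by (simp add: Ms_tmod)
  ultimately show ?thesis
    using C0_const [OF E extn_in_Ms [OF E] _ openin_mcar [OF E]] by simp
qed

lemma C0_taylor_point: "C0 (ext1 T Km E) (extn T Km m E) (mcar (ext1 T Km E)) (taylor_point T Km E m)"
proof -
  have "C0 (ext1 T Km E) (prodm T E E) (mcar (ext1 T Km E)) (\<lambda>p. Pr (pfst p) (pfst (psnd p)))"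
    by (rule C0_pair [OF C0_ext1_proj(1,2) [OF E]])
  then have base: "C0 (ext1 T Km E) (extn T Km m E) (mcar (ext1 T Km E))
      (\<lambda>p. taylor_base T Km E m (Pr (pfst p) (pfst (psnd p))))"
    using C0_comp [OF _ C0_taylor_base] C0_image by blast
  have dir: "C0 (ext1 T Km E) (extn T Km m E) (mcar (ext1 T Km E)) (\<lambda>p. taylor_dir T Km E m (pfst (psnd p)))"
    using C0_comp [OF C0_ext1_proj(2) [OF E] C0_taylor_dir] C0_image [OF C0_ext1_proj(2) [OF E]] by blast
  show ?thesis
    unfolding taylor_point_def [abs_def] by (rule C0_add [OF base C0_smul [OF C0_ext1_proj(3) [OF E] dir]])
qed

end

lemma openin_base_domain:
  assumes E: "E \<in> Ms" and U: "openin (mtop E) U"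
  shows "openin (mtop (prodm T E E)) {Pr x h | x h. x \<in> U \<and> h \<in> mcar E}"
proof -
  have "{Pr x h | x h. x \<in> U \<and> h \<in> mcar E} = {z \<in> mcar (prodm T E E). pfst z \<in> U}"
    using openin_subset_mcar [OF E U] by auto
  then show ?thesis using openin_C0_preimage [OF C0_pfst [OF E E] U] by simp
qed

context
  fixes E F :: "('k, 'b) tmod" and U :: "('k, 'b) pt set" and k :: nat
    and f :: "('k, 'b) pt \<Rightarrow> ('k, 'b) pt" and G :: "nat \<Rightarrow> ('k, 'b) pt \<Rightarrow> ('k, 'b) pt"
  assumes E: "E \<in> Ms" and F: "F \<in> Ms" and U: "openin (mtop E) U"
    and G0: "G 0 = f"
    and GC: "\<forall>i\<le>k. C0 (extn T Km i E) F (domn T Km i E U) (G i)"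
    and Gdq: "\<forall>i<k. is_dq (extn T Km i E) F (domn T Km i E U) (G i) (G (Suc i))"
begin

lemma taylor_coeff_isCk:
  assumes j: "j \<le> k"
  shows "isCk T Km C0 (k - j) (prodm T E E) F {Pr x h | x h. x \<in> U \<and> h \<in> mcar E}
    (\<lambda>z. G j (taylor_base T Km E j z))"
proof -
  obtain L0 where "affine_map (prodm T E E) (extn T Km j E) (taylor_base T Km E j) L0"
    using affine_map_taylor_base [OF E] by blast
  from isCk_comp_affine [OF isCk_chain_suffix [of k C0 T Km E F U G, OF GC Gdq j] this openin_base_domain [OF E U]]
  show ?thesis using taylor_base_mem [OF E U] by blast
qed

lemma taylor_coeff_mem:
  "j \<le> k \<Longrightarrow> x \<in> U \<Longrightarrow> h \<in> mcar E \<Longrightarrow> G j (taylor_base T Km E j (Pr x h)) \<in> mcar F"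
  using C0_image GC taylor_base_mem [OF E U] by blast

lemma taylor_point_dq:
  assumes m: "m < k" and p: "Pr x (Pr h (Sc t)) \<in> dom1 E U"
  shows "G m (taylor_point T Km E m (Pr x (Pr h (Sc t)))) =
    madd F (G m (taylor_base T Km E m (Pr x h)))
      (msmul F t (G (Suc m) (taylor_point T Km E (Suc m) (Pr x (Pr h (Sc t))))))"
proof -
  have x: "x \<in> U" and h: "h \<in> mcar E" using p by auto
  have "taylor_point T Km E m (Pr x (Pr h (Sc t))) =
      madd (extn T Km m E) (taylor_base T Km E m (Pr x h)) (msmul (extn T Km m E) t (taylor_dir T Km E m h))"
    by (simp add: taylor_point_def)
  then show ?thesis
    using Gdq m taylor_base_mem [OF E U x h] taylor_dir_mem [OF E U h] taylor_point_mem [OF E U p, of m]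
      taylor_point_Suc [OF E U x h]
    unfolding is_dq_def by metis
qed

lemma taylor_partial_expansion:
  assumes p: "Pr x (Pr h (Sc t)) \<in> dom1 E U"
  shows "m \<le> k \<Longrightarrow> f (madd E x (msmul E t h)) =
    madd F (msum F (\<lambda>j. msmul F (t ^ j) (G j (taylor_base T Km E j (Pr x h)))) m)
      (msmul F (t ^ m) (G m (taylor_point T Km E m (Pr x (Pr h (Sc t))))))"
proof (induction m)
  case 0
  have "f (madd E x (msmul E t h)) \<in> mcar F"
    using C0_image GC G0 p by force
  then show ?case using G0 Ms_tmod [OF F] by (simp add: taylor_point_def)
next
  case (Suc m)
  have x: "x \<in> U" and h: "h \<in> mcar E" using p by auto
  let ?a = "\<lambda>j. G j (taylor_base T Km E j (Pr x h))"
  let ?y = "G (Suc m) (taylor_point T Km E (Suc m) (Pr x (Pr h (Sc t))))"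
  have "?y \<in> mcar F"
    using C0_image [OF GC [rule_format, of "Suc m"] taylor_point_mem [OF E U p]] Suc.prems by simp
  have "f (madd E x (msmul E t h)) =
      madd F (msum F (\<lambda>j. msmul F (t ^ j) (?a j)) m)
        (msmul F (t ^ m) (G m (taylor_point T Km E m (Pr x (Pr h (Sc t))))))"
    using Suc by simp
  also have "\<dots> = madd F (msum F (\<lambda>j. msmul F (t ^ j) (?a j)) m) (msmul F (t ^ m) (madd F (?a m) (msmul F t ?y)))"
    using taylor_point_dq [OF _ p, of m] Suc.prems by simp
  also have "\<dots> = madd F (msum F (\<lambda>j. msmul F (t ^ j) (?a j)) (Suc m)) (msmul F (t ^ Suc m) ?y)"
    using Suc.prems
    by (intro msum_pow_smul_Suc [symmetric, OF Ms_tmod [OF F]] taylor_coeff_mem [OF _ x h] \<open>?y \<in> mcar F\<close>)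
      simp
  finally show ?case .
qed

lemma taylor_exp_witness:
  "taylor_exp T Km C0 E F U k f (\<lambda>j z. G j (taylor_base T Km E j z))
     (\<lambda>p. madd F (G k (taylor_point T Km E k p))
            (msmul F (-1) (G k (taylor_base T Km E k (Pr (pfst p) (pfst (psnd p)))))))"
proof -
  have Ft: "is_tmod F" using Ms_tmod [OF F] .
  have GkC: "C0 (extn T Km k E) F (domn T Km k E U) (G k)" using GC by simp
  have dom1: "openin (mtop (ext1 T Km E)) (dom1 E U)" "dom1 E U \<subseteq> mcar (ext1 T Km E)"
    using openin_dom1 [OF E U] openin_subset_mcar [OF ext1_in_Ms [OF E]] by auto
  have "taylor_point T Km E k p \<in> domn T Km k E U" if "p \<in> dom1 E U" for p
    using that by (elim dom1E) (simp add: taylor_point_mem [OF E U])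
  then have point: "C0 (ext1 T Km E) F (dom1 E U) (\<lambda>p. G k (taylor_point T Km E k p))"
    using C0_comp [OF C0_restrict [OF C0_taylor_point [OF E] dom1] GkC] by blast
  have "C0 (ext1 T Km E) (prodm T E E) (dom1 E U) (\<lambda>p. Pr (pfst p) (pfst (psnd p)))"
    using C0_restrict [OF C0_pair [OF C0_ext1_proj(1,2) [OF E]] dom1] .
  then have base: "C0 (ext1 T Km E) F (dom1 E U) (\<lambda>p. G k (taylor_base T Km E k (Pr (pfst p) (pfst (psnd p)))))"
    using C0_comp [OF _ isCk_C0 [OF taylor_coeff_isCk [OF order.refl]]] by (fastforce elim: dom1E)
  show ?thesis unfolding taylor_exp_def
  proof (intro conjI allI impI ballI)
    show "isCk T Km C0 (k - j) (prodm T E E) F {Pr x h | x h. x \<in> U \<and> h \<in> mcar E}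
        (\<lambda>z. G j (taylor_base T Km E j z))" if "j \<le> k" for j
      using taylor_coeff_isCk [OF that] .
    show "C0 (ext1 T Km E) F (dom1 E U) (\<lambda>p. madd F (G k (taylor_point T Km E k p))
        (msmul F (-1) (G k (taylor_base T Km E k (Pr (pfst p) (pfst (psnd p)))))))"
      using C0_add [OF point C0_scale [OF base]] .
  next
    fix x h assume "x \<in> U" "h \<in> mcar E"
    then show "madd F (G k (taylor_point T Km E k (Pr x (Pr h (Sc 0)))))
        (msmul F (-1) (G k (taylor_base T Km E k (Pr (pfst (Pr x (Pr h (Sc 0)))) (pfst (psnd (Pr x (Pr h (Sc 0)))))))))
        = mzero F"
      using taylor_point_Sc0 [OF E U] taylor_coeff_mem tmod_add_neg [OF Ft] by simp
  next
    fix x h t assume p: "Pr x (Pr h (Sc t)) \<in> dom1 E U"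
    then have x: "x \<in> U" and h: "h \<in> mcar E" by auto
    let ?a = "\<lambda>j. G j (taylor_base T Km E j (Pr x h))"
    let ?y = "G k (taylor_point T Km E k (Pr x (Pr h (Sc t))))"
    let ?r = "madd F ?y (msmul F (-1) (?a k))"
    have "?y \<in> mcar F" using C0_image [OF GkC taylor_point_mem [OF E U p]] .
    have "f (madd E x (msmul E t h)) = madd F (msum F (\<lambda>j. msmul F (t ^ j) (?a j)) k) (msmul F (t ^ k) ?y)"
      using taylor_partial_expansion [OF p order.refl] .
    also have "\<dots> = madd F (msum F (\<lambda>j. msmul F (t ^ j) (?a j)) k) (msmul F (t ^ k) (madd F (?a k) ?r))"
      using tmod_add_diff_cancel [OF Ft taylor_coeff_mem [OF order.refl x h] \<open>?y \<in> mcar F\<close>] by simp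
    also have "\<dots> = madd F (msum F (\<lambda>j. msmul F (t ^ j) (?a j)) (Suc k)) (msmul F (t ^ k) ?r)"
      by (intro msum_pow_smul_last [symmetric, OF Ft] taylor_coeff_mem [OF _ x h] tmod_add_closed [OF Ft]
          tmod_smul_closed [OF Ft] \<open>?y \<in> mcar F\<close> order.refl)
    finally show "f (madd E x (msmul E t h)) =
        madd F (msum F (\<lambda>j. msmul F (t ^ j) (G j (taylor_base T Km E j (Pr x h)))) (Suc k))
          (msmul F (t ^ k) (madd F (G k (taylor_point T Km E k (Pr x (Pr h (Sc t)))))
            (msmul F (-1) (G k (taylor_base T Km E k (Pr (pfst (Pr x (Pr h (Sc t)))) (pfst (psnd (Pr x (Pr h (Sc t)))))))))))"
      by simp
  qed
qed

end

lemma taylor_exp_exists: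
  assumes "E \<in> Ms" "F \<in> Ms" "openin (mtop E) U" "isCk T Km C0 k E F U f"
  shows "\<exists>a R. taylor_exp T Km C0 E F U k f a R"
  using assms taylor_exp_witness unfolding isCk_def by blast

section \<open>Uniqueness and homogeneity\<close>

lemma cancel_scaled_remainder:
  assumes W: "openin (mtop Km) W" and W0: "Sc 0 \<in> W"
    and \<rho>: "C0 Km F W \<rho>" and \<sigma>: "C0 Km F W \<sigma>" and b: "b \<in> mcar F" and c: "c \<in> mcar F"
    and eq: "\<And>t. Sc t \<in> W \<Longrightarrow> madd F b (msmul F t (\<rho> (Sc t))) = madd F c (msmul F t (\<sigma> (Sc t)))"
  shows "b = c" and "\<forall>s\<in>W. \<rho> s = \<sigma> s"
proof -
  have F: "is_tmod F" using Ms_tmod [OF C0_cod_in_Ms [OF \<rho>]] .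
  show bc: "b = c" using eq [OF W0] C0_image [OF \<rho> W0] C0_image [OF \<sigma> W0] F b c by simp
  have "\<rho> s = \<sigma> s" if "s \<in> W \<inter> Sc ` {t. t dvd 1}" for s
  proof -
    from that obtain t where t: "s = Sc t" "Sc t \<in> W" "t dvd 1" by auto
    then obtain u where u: "1 = t * u" by (auto elim: dvdE)
    have \<rho>t: "\<rho> (Sc t) \<in> mcar F" and \<sigma>t: "\<sigma> (Sc t) \<in> mcar F" using C0_image \<rho> \<sigma> t(2) by blast+
    have "msmul F t (\<rho> (Sc t)) = msmul F t (\<sigma> (Sc t))"
      using tmod_add_left_cancel [OF F b] eq [OF t(2)] bc \<rho>t \<sigma>t F by simp
    then have "msmul F u (msmul F t (\<rho> (Sc t))) = msmul F u (msmul F t (\<sigma> (Sc t)))" by simp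
    then show ?thesis using t u \<rho>t \<sigma>t F by (simp add: tmod_smul_smul mult.commute)
  qed
  then show "\<forall>s\<in>W. \<rho> s = \<sigma> s" using C0_eq_on_units [OF W \<rho> \<sigma>] by blast
qed

lemma poly_expansion_unique:
  assumes W: "openin (mtop Km) W" and W0: "Sc 0 \<in> W"
  shows "C0 Km F W \<rho> \<Longrightarrow> C0 Km F W \<sigma> \<Longrightarrow> (\<And>j. j < k \<Longrightarrow> b j \<in> mcar F \<and> c j \<in> mcar F) \<Longrightarrow>
    (\<And>t. Sc t \<in> W \<Longrightarrow>
      madd F (msum F (\<lambda>j. msmul F (t ^ j) (b j)) k) (msmul F (t ^ k) (\<rho> (Sc t))) =
      madd F (msum F (\<lambda>j. msmul F (t ^ j) (c j)) k) (msmul F (t ^ k) (\<sigma> (Sc t)))) \<Longrightarrow>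
    (\<forall>j<k. b j = c j) \<and> (\<forall>s\<in>W. \<rho> s = \<sigma> s)"
proof (induction k arbitrary: \<rho> \<sigma>)
  case 0
  have F: "is_tmod F" using Ms_tmod [OF C0_cod_in_Ms [OF "0.prems"(1)]] .
  have "\<rho> s = \<sigma> s" if s: "s \<in> W" for s
  proof -
    obtain t where t: "s = Sc t" using s openin_subset_mcar [OF Km_in_Ms W] Km_cases by blast
    show ?thesis
      using "0.prems"(4) [of t] s t C0_image [OF "0.prems"(1) s] C0_image [OF "0.prems"(2) s] F by simp
  qed
  then show ?case by simp
next
  case (Suc k \<rho> \<sigma>)
  note \<rho> = Suc.prems(1) and \<sigma> = Suc.prems(2) and bc = Suc.prems(3)
  have F: "is_tmod F" using Ms_tmod [OF C0_cod_in_Ms [OF \<rho>]] .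
  define \<rho>' where "\<rho>' = (\<lambda>s. madd F (b k) (msmul F (unSc s) (\<rho> s)))"
  define \<sigma>' where "\<sigma>' = (\<lambda>s. madd F (c k) (msmul F (unSc s) (\<sigma> s)))"
  have bk: "b k \<in> mcar F" "c k \<in> mcar F" using bc by auto
  have \<rho>': "C0 Km F W \<rho>'" unfolding \<rho>'_def
    by (rule C0_add_const [OF C0_smul [OF C0_ident [OF \<rho>] \<rho>] bk(1)])
  have \<sigma>': "C0 Km F W \<sigma>'" unfolding \<sigma>'_def
    by (rule C0_add_const [OF C0_smul [OF C0_ident [OF \<sigma>] \<sigma>] bk(2)])
  have "madd F (msum F (\<lambda>j. msmul F (t ^ j) (b j)) k) (msmul F (t ^ k) (\<rho>' (Sc t))) =
      madd F (msum F (\<lambda>j. msmul F (t ^ j) (c j)) k) (msmul F (t ^ k) (\<sigma>' (Sc t)))" if t: "Sc t \<in> W" for t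
    using Suc.prems(4) [OF t] msum_pow_smul_Suc [OF F, of k b "\<rho> (Sc t)" t] msum_pow_smul_Suc [OF F, of k c "\<sigma> (Sc t)" t]
      bc C0_image [OF \<rho> t] C0_image [OF \<sigma> t]
    unfolding \<rho>'_def \<sigma>'_def by simp
  from Suc.IH [OF \<rho>' \<sigma>' _ this] bc
  have IH: "(\<forall>j<k. b j = c j) \<and> (\<forall>s\<in>W. \<rho>' s = \<sigma>' s)" by simp
  have "madd F (b k) (msmul F t (\<rho> (Sc t))) = madd F (c k) (msmul F t (\<sigma> (Sc t)))" if "Sc t \<in> W" for t
    using bspec [OF IH [THEN conjunct2] that] unfolding \<rho>'_def \<sigma>'_def by simp
  from cancel_scaled_remainder [OF W W0 \<rho> \<sigma> bk this]
  have "b k = c k" and "\<forall>s\<in>W. \<rho> s = \<sigma> s" by blast+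
  with IH show ?case using less_Suc_eq by auto
qed

lemma poly_expansion_unique_vanishing:
  assumes W: "openin (mtop Km) W" and W0: "Sc 0 \<in> W"
    and \<rho>: "C0 Km F W \<rho>" and \<sigma>: "C0 Km F W \<sigma>" and bc: "\<And>j. j \<le> k \<Longrightarrow> b j \<in> mcar F \<and> c j \<in> mcar F"
    and \<rho>0: "\<rho> (Sc 0) = mzero F" and \<sigma>0: "\<sigma> (Sc 0) = mzero F"
    and eq: "\<And>t. Sc t \<in> W \<Longrightarrow>
      madd F (msum F (\<lambda>j. msmul F (t ^ j) (b j)) (Suc k)) (msmul F (t ^ k) (\<rho> (Sc t))) =
      madd F (msum F (\<lambda>j. msmul F (t ^ j) (c j)) (Suc k)) (msmul F (t ^ k) (\<sigma> (Sc t)))"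
  shows "(\<forall>j\<le>k. b j = c j) \<and> (\<forall>s\<in>W. \<rho> s = \<sigma> s)"
proof -
  have F: "is_tmod F" using Ms_tmod [OF C0_cod_in_Ms [OF \<rho>]] .
  have bk: "b k \<in> mcar F" "c k \<in> mcar F" using bc by auto
  have \<rho>': "C0 Km F W (\<lambda>s. madd F (b k) (\<rho> s))" and \<sigma>': "C0 Km F W (\<lambda>s. madd F (c k) (\<sigma> s))"
    using C0_add_const \<rho> \<sigma> bk by blast+
  have eq': "madd F (msum F (\<lambda>j. msmul F (t ^ j) (b j)) k) (msmul F (t ^ k) (madd F (b k) (\<rho> (Sc t)))) =
      madd F (msum F (\<lambda>j. msmul F (t ^ j) (c j)) k) (msmul F (t ^ k) (madd F (c k) (\<sigma> (Sc t))))"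
    if t: "Sc t \<in> W" for t
    using eq [OF t] msum_pow_smul_last [OF F, of k b "\<rho> (Sc t)" t] msum_pow_smul_last [OF F, of k c "\<sigma> (Sc t)" t]
      bc C0_image [OF \<rho> t] C0_image [OF \<sigma> t]
    by simp
  have shifted: "(\<forall>j<k. b j = c j) \<and> (\<forall>s\<in>W. madd F (b k) (\<rho> s) = madd F (c k) (\<sigma> s))"
    using poly_expansion_unique [OF W W0 \<rho>' \<sigma>' _ eq'] bc by simp
  then have "madd F (b k) (\<rho> (Sc 0)) = madd F (c k) (\<sigma> (Sc 0))" using W0 by blast
  then have bkc: "b k = c k" using \<rho>0 \<sigma>0 bk F by simp
  have "\<rho> s = \<sigma> s" if s: "s \<in> W" for s
  proof -
    have "madd F (b k) (\<rho> s) = madd F (b k) (\<sigma> s)" using shifted bkc s by simp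
    then show ?thesis by (rule tmod_add_left_cancel [OF F bk(1) C0_image [OF \<rho> s] C0_image [OF \<sigma> s]])
  qed
  with shifted bkc show ?thesis by (auto simp: le_less)
qed

definition line_dom :: "('k, 'b) tmod \<Rightarrow> ('k, 'b) pt set \<Rightarrow> ('k, 'b) pt \<Rightarrow> ('k, 'b) pt \<Rightarrow> ('k, 'b) pt set"
  where "line_dom E U x h = {s \<in> mcar Km. madd E x (msmul E (unSc s) h) \<in> U}"

lemma Sc_in_line_dom [simp]: "Sc t \<in> line_dom E U x h \<longleftrightarrow> madd E x (msmul E t h) \<in> U"
  by (simp add: line_dom_def)

lemma line_dom_subset: "line_dom E U x h \<subseteq> mcar Km"
  by (auto simp: line_dom_def)

context
  fixes E :: "('k, 'b) tmod" and U :: "('k, 'b) pt set" and x h :: "('k, 'b) pt"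
  assumes E: "E \<in> Ms" and U: "openin (mtop E) U" and x: "x \<in> U" and h: "h \<in> mcar E"
begin

lemma openin_line_dom: "openin (mtop Km) (line_dom E U x h)"
proof -
  have "x \<in> mcar E" using openin_subset_mcar [OF E U] x by blast
  then have "C0 Km E (mcar Km) (\<lambda>s. madd E x (msmul E (unSc s) h))"
    using C0_cong [OF C0_line [OF E h]] h Ms_tmod [OF E] by (simp add: tmod_add_commute)
  from openin_C0_preimage [OF this U] show ?thesis by (simp add: line_dom_def)
qed

lemma Sc0_in_line_dom: "Sc 0 \<in> line_dom E U x h"
  using x h openin_subset_mcar [OF E U] Ms_tmod [OF E] by auto

lemma C0_on_line:
  assumes R: "C0 (ext1 T Km E) F (dom1 E U) R"
  shows "C0 Km F (line_dom E U x h) (\<lambda>s. R (Pr x (Pr h s)))"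
proof -
  have "x \<in> mcar E" using openin_subset_mcar [OF E U] x by blast
  then have "C0 (prodm T E Km) (ext1 T Km E) (mcar (prodm T E Km)) (\<lambda>w. Pr x w)"
    unfolding ext1_def using C0_Pr_right [OF E prodm_in_Ms [OF E Km_in_Ms]] by blast
  from C0_comp [OF C0_Pr_right [OF E Km_in_Ms h] this]
  have "C0 Km (ext1 T Km E) (mcar Km) (\<lambda>s. Pr x (Pr h s))"
    using C0_image [OF C0_Pr_right [OF E Km_in_Ms h]] by blast
  then have "C0 Km (ext1 T Km E) (line_dom E U x h) (\<lambda>s. Pr x (Pr h s))"
    using C0_restrict openin_line_dom line_dom_subset by blast
  moreover have "Pr x (Pr h s) \<in> dom1 E U" if "s \<in> line_dom E U x h" for s
    using that x h by (auto simp: line_dom_def Km_carrier)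
  ultimately show ?thesis using C0_comp [OF _ R] by blast
qed

end

lemma taylor_exp_coeff_mem:
  assumes "taylor_exp T Km C0 E F U k f a R" "j \<le> k" "x \<in> U" "h \<in> mcar E"
  shows "a j (Pr x h) \<in> mcar F"
proof -
  have "isCk T Km C0 (k - j) (prodm T E E) F {Pr x h | x h. x \<in> U \<and> h \<in> mcar E} (a j)"
    using assms unfolding taylor_exp_def by blast
  from C0_image [OF isCk_C0 [OF this]] show ?thesis using assms by blast
qed

lemma taylor_exp_expansion:
  "taylor_exp T Km C0 E F U k f a R \<Longrightarrow> Pr x (Pr h (Sc t)) \<in> dom1 E U \<Longrightarrow>
   f (madd E x (msmul E t h)) =
     madd F (msum F (\<lambda>j. msmul F (t ^ j) (a j (Pr x h))) (Suc k)) (msmul F (t ^ k) (R (Pr x (Pr h (Sc t)))))"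
  unfolding taylor_exp_def by blast

context
  fixes E F :: "('k, 'b) tmod" and U :: "('k, 'b) pt set" and k :: nat and f :: "('k, 'b) pt \<Rightarrow> ('k, 'b) pt"
  assumes E: "E \<in> Ms" and U: "openin (mtop E) U"
begin

lemma taylor_exp_unique:
  assumes A: "taylor_exp T Km C0 E F U k f a R" and B: "taylor_exp T Km C0 E F U k f a' R'"
  shows "(\<forall>j\<le>k. \<forall>x\<in>U. \<forall>h\<in>mcar E. a' j (Pr x h) = a j (Pr x h)) \<and> (\<forall>p\<in>dom1 E U. R' p = R p)"
proof -
  have on_line: "(\<forall>j\<le>k. a' j (Pr x h) = a j (Pr x h)) \<and>
      (\<forall>s\<in>line_dom E U x h. R' (Pr x (Pr h s)) = R (Pr x (Pr h s)))"
    if x: "x \<in> U" and h: "h \<in> mcar E" for x h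
  proof (rule poly_expansion_unique_vanishing [OF openin_line_dom [OF E U x h] Sc0_in_line_dom [OF E U x h]])
    show "C0 Km F (line_dom E U x h) (\<lambda>s. R' (Pr x (Pr h s)))"
      and "C0 Km F (line_dom E U x h) (\<lambda>s. R (Pr x (Pr h s)))"
      using C0_on_line [OF E U x h] A B by (simp_all add: taylor_exp_def)
    show "a' j (Pr x h) \<in> mcar F \<and> a j (Pr x h) \<in> mcar F" if "j \<le> k" for j
      using taylor_exp_coeff_mem A B x h that by blast
    show "R' (Pr x (Pr h (Sc 0))) = mzero F" and "R (Pr x (Pr h (Sc 0))) = mzero F"
      using A B x h by (simp_all add: taylor_exp_def)
    fix t assume "Sc t \<in> line_dom E U x h"
    then have p: "Pr x (Pr h (Sc t)) \<in> dom1 E U" using x h by simp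
    show "madd F (msum F (\<lambda>j. msmul F (t ^ j) (a' j (Pr x h))) (Suc k)) (msmul F (t ^ k) (R' (Pr x (Pr h (Sc t))))) =
        madd F (msum F (\<lambda>j. msmul F (t ^ j) (a j (Pr x h))) (Suc k)) (msmul F (t ^ k) (R (Pr x (Pr h (Sc t)))))"
      using taylor_exp_expansion [OF B p, symmetric] taylor_exp_expansion [OF A p] by (rule trans)
  qed
  show ?thesis
  proof (intro conjI ballI allI impI)
    fix j x h assume "j \<le> k" "x \<in> U" "h \<in> mcar E"
    then show "a' j (Pr x h) = a j (Pr x h)" using on_line by blast
  next
    fix p assume "p \<in> dom1 E U"
    then obtain x h t where "p = Pr x (Pr h (Sc t))" "x \<in> U" "h \<in> mcar E" "Sc t \<in> line_dom E U x h"
      by (auto elim: dom1E)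
    then show "R' p = R p" using on_line by blast
  qed
qed

end

context
  fixes E F :: "('k, 'b) tmod" and U :: "('k, 'b) pt set" and k :: nat and f :: "('k, 'b) pt \<Rightarrow> ('k, 'b) pt"
    and a :: "nat \<Rightarrow> ('k, 'b) pt \<Rightarrow> ('k, 'b) pt" and R :: "('k, 'b) pt \<Rightarrow> ('k, 'b) pt"
    and x h :: "('k, 'b) pt" and s :: 'k
  assumes E: "E \<in> Ms" and U: "openin (mtop E) U" and A: "taylor_exp T Km C0 E F U k f a R"
    and x: "x \<in> U" and h: "h \<in> mcar E"
begin

lemma Sc_mult_in_line_dom: "Sc t \<in> line_dom E U x (msmul E s h) \<Longrightarrow> Sc (s * t) \<in> line_dom E U x h"
  using h Ms_tmod [OF E] by (simp add: tmod_smul_smul mult.commute)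

lemma C0_rescaled_remainder:
  "C0 Km F (line_dom E U x (msmul E s h)) (\<lambda>w. msmul F (s ^ k) (R (Pr x (Pr h (Sc (s * unSc w))))))"
proof -
  let ?W = "line_dom E U x (msmul E s h)"
  have h': "msmul E s h \<in> mcar E" using h Ms_tmod [OF E] by simp
  have "C0 Km Km ?W (\<lambda>w. madd Km (msmul Km s w) (Sc 0))"
    using C0_restrict [OF C0_affine [OF Km_in_Ms, of "Sc 0" s] openin_line_dom [OF E U x h'] line_dom_subset]
    by (simp add: Km_carrier)
  then have "C0 Km Km ?W (\<lambda>w. Sc (s * unSc w))"
    by (rule C0_cong) (auto simp: line_dom_def Km_carrier)
  moreover have "C0 Km F (line_dom E U x h) (\<lambda>w. R (Pr x (Pr h w)))"
    using C0_on_line [OF E U x h] A by (simp add: taylor_exp_def)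
  moreover have "Sc (s * unSc w) \<in> line_dom E U x h" if w: "w \<in> ?W" for w
  proof -
    obtain t where "w = Sc t" using w line_dom_subset Km_cases by blast
    then show ?thesis using w Sc_mult_in_line_dom by simp
  qed
  ultimately have "C0 Km F ?W (\<lambda>w. R (Pr x (Pr h (Sc (s * unSc w)))))"
    by (rule C0_comp)
  then show ?thesis by (rule C0_scale)
qed

lemma taylor_exp_rescaled:
  assumes t: "Sc t \<in> line_dom E U x (msmul E s h)"
  shows "f (madd E x (msmul E t (msmul E s h))) =
    madd F (msum F (\<lambda>j. msmul F (t ^ j) (msmul F (s ^ j) (a j (Pr x h)))) (Suc k))
      (msmul F (t ^ k) (msmul F (s ^ k) (R (Pr x (Pr h (Sc (s * t)))))))"
proof -
  have Ft: "is_tmod F" using A Ms_tmod C0_cod_in_Ms unfolding taylor_exp_def by blast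
  have p: "Pr x (Pr h (Sc (s * t))) \<in> dom1 E U" using Sc_mult_in_line_dom [OF t] x h by simp
  have scale: "msmul F ((s * t) ^ i) y = msmul F (t ^ i) (msmul F (s ^ i) y)" if "y \<in> mcar F" for i y
    using that Ft by (simp add: tmod_smul_smul power_mult_distrib mult.commute)
  have "f (madd E x (msmul E t (msmul E s h))) = f (madd E x (msmul E (s * t) h))"
    using h Ms_tmod [OF E] by (simp add: tmod_smul_smul mult.commute)
  also have "\<dots> = madd F (msum F (\<lambda>j. msmul F ((s * t) ^ j) (a j (Pr x h))) (Suc k))
      (msmul F ((s * t) ^ k) (R (Pr x (Pr h (Sc (s * t))))))"
    using taylor_exp_expansion [OF A p] .
  also have "\<dots> = madd F (msum F (\<lambda>j. msmul F (t ^ j) (msmul F (s ^ j) (a j (Pr x h)))) (Suc k))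
      (msmul F (t ^ k) (msmul F (s ^ k) (R (Pr x (Pr h (Sc (s * t)))))))"
  proof -
    have "R (Pr x (Pr h (Sc (s * t)))) \<in> mcar F"
      using C0_image [OF _ p] A unfolding taylor_exp_def by blast
    moreover have "msum F (\<lambda>j. msmul F ((s * t) ^ j) (a j (Pr x h))) (Suc k) =
        msum F (\<lambda>j. msmul F (t ^ j) (msmul F (s ^ j) (a j (Pr x h)))) (Suc k)"
      by (rule msum_cong) (simp add: scale taylor_exp_coeff_mem [OF A _ x h] less_Suc_eq_le)
    ultimately show ?thesis by (simp add: scale)
  qed
  finally show ?thesis .
qed

lemma taylor_exp_homogeneous:
  assumes j: "j \<le> k"
  shows "a j (Pr x (msmul E s h)) = msmul F (s ^ j) (a j (Pr x h))"
proof -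
  have Ft: "is_tmod F" using A Ms_tmod C0_cod_in_Ms unfolding taylor_exp_def by blast
  have h': "msmul E s h \<in> mcar E" using h Ms_tmod [OF E] by simp
  have "(\<forall>j\<le>k. a j (Pr x (msmul E s h)) = msmul F (s ^ j) (a j (Pr x h))) \<and>
      (\<forall>w\<in>line_dom E U x (msmul E s h).
         R (Pr x (Pr (msmul E s h) w)) = msmul F (s ^ k) (R (Pr x (Pr h (Sc (s * unSc w))))))"
  proof (rule poly_expansion_unique_vanishing [OF openin_line_dom [OF E U x h'] Sc0_in_line_dom [OF E U x h']
        _ C0_rescaled_remainder])
    show "C0 Km F (line_dom E U x (msmul E s h)) (\<lambda>w. R (Pr x (Pr (msmul E s h) w)))"
      using C0_on_line [OF E U x h'] A by (simp add: taylor_exp_def)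
    show "a i (Pr x (msmul E s h)) \<in> mcar F \<and> msmul F (s ^ i) (a i (Pr x h)) \<in> mcar F" if "i \<le> k" for i
      using taylor_exp_coeff_mem [OF A that x] h h' Ft by simp
    show "R (Pr x (Pr (msmul E s h) (Sc 0))) = mzero F"
      and "msmul F (s ^ k) (R (Pr x (Pr h (Sc (s * unSc (Sc 0)))))) = mzero F"
      using A x h h' Ft by (simp_all add: taylor_exp_def)
    fix t assume t: "Sc t \<in> line_dom E U x (msmul E s h)"
    then have "Pr x (Pr (msmul E s h) (Sc t)) \<in> dom1 E U" using x h' by simp
    from taylor_exp_expansion [OF A this, symmetric] taylor_exp_rescaled [OF t]
    show "madd F (msum F (\<lambda>j. msmul F (t ^ j) (a j (Pr x (msmul E s h)))) (Suc k))
          (msmul F (t ^ k) (R (Pr x (Pr (msmul E s h) (Sc t))))) =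
        madd F (msum F (\<lambda>j. msmul F (t ^ j) (msmul F (s ^ j) (a j (Pr x h)))) (Suc k))
          (msmul F (t ^ k) (msmul F (s ^ k) (R (Pr x (Pr h (Sc (s * unSc (Sc t))))))))"
      by simp
  qed
  then show ?thesis using j by blast
qed

end

end

theorem theorem5p1:
  fixes Ms :: "('k::comm_ring_1, 'b) tmod set"
    and Km E F :: "('k, 'b) tmod"
    and T :: "('k, 'b) tmod \<Rightarrow> ('k, 'b) tmod \<Rightarrow> ('k, 'b) pt topology"
    and C0 :: "('k, 'b) tmod \<Rightarrow> ('k, 'b) tmod \<Rightarrow> ('k, 'b) pt set \<Rightarrow> (('k, 'b) pt \<Rightarrow> ('k, 'b) pt) \<Rightarrow> bool"
    and U :: "('k, 'b) pt set"
    and k :: nat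
    and f :: "('k, 'b) pt \<Rightarrow> ('k, 'b) pt"
  assumes concept: "c0_concept Ms Km T C0"
    and E: "E \<in> Ms" and F: "F \<in> Ms"
    and U: "openin (mtop E) U"
    and f: "isCk T Km C0 k E F U f"
  shows "\<exists>a R. taylor_exp T Km C0 E F U k f a R \<and>
           (\<forall>a' R'. taylor_exp T Km C0 E F U k f a' R' \<longrightarrow>
              (\<forall>j\<le>k. \<forall>x\<in>U. \<forall>h\<in>mcar E. a' j (Pr x h) = a j (Pr x h)) \<and>
              (\<forall>p\<in>dom1 E U. R' p = R p)) \<and>
           (\<forall>j\<le>k. \<forall>x\<in>U. \<forall>h\<in>mcar E. \<forall>s.
              a j (Pr x (msmul E s h)) = msmul F (s ^ j) (a j (Pr x h)))"
proof -
  interpret c0_setting Ms Km T C0 using concept by unfold_locales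
  obtain a R where A: "taylor_exp T Km C0 E F U k f a R"
    using taylor_exp_exists [OF E F U f] by blast
  show ?thesis
    using A taylor_exp_unique [OF E U A] taylor_exp_homogeneous [OF E U A] by blast
qed

end
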